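(* Let $P_Z$ be a distribution on $\mathcal{Z}$, let $S=(Z_1,\ldots,Z_n)$ consist of $n$ i.i.d. samples from $P_Z$, and let $W\in\mathcal{W}$ be produced by a conditional distribution $P_{W|S}$. Let $\ell:\mathcal{W}\times\mathcal{Z}\to\mathbb{R}$ be a loss function such that $(\mathcal{W},\rho)$ is a Polish metric space, $w\mapsto\ell(w,z)$ is $L$-Lipschitz under $\rho$ for every $z\in\mathcal{Z}$, and $\ell$ takes values in $[a,b]$. Then $$\big|\overline{\mathrm{gen}}(W,S)\big| \le \frac{b-a}{n}\sum_{i=1}^n \mathbb{E}\big[\mathrm{TV}(P_{W|Z_i},P_W)\big] \le \frac{b-a}{n}\sum_{i=1}^n \mathbb{E}\big[\Psi\big(D(P_{W|Z_i}\,\|\,P_W)\big)\big].$$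
   Context: Population risk $\mathscr{L}_{P_Z}(w)=\mathbb{E}[\ell(w,Z)]$, $Z\sim P_Z$; empirical risk $\mathscr{L}_s(w)=\frac1n\sum_{i=1}^n\ell(w,z_i)$; $\overline{\mathrm{gen}}(W,S)=\mathbb{E}[\mathscr{L}_{P_Z}(W)-\mathscr{L}_S(W)]$. $P_W$ is the marginal of $W$, $P_{W|Z_i}$ the conditional law of $W$ given $Z_i$, expectations in the bound are over $Z_i$. $L$-Lipschitz under $\rho$ means $|f(x)-f(y)|\le L\rho(x,y)$. $\mathrm{TV}(P,Q)=\sup_{A}\{P(A)-Q(A)\}$ over measurable sets $A$; $D(P\|Q)$ is the relative entropy (KL divergence); $\Psi(x)=\sqrt{\min\{x/2,\,1-e^{-x}\}}$. *)

theory Defs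
  imports "HOL-Probability.Probability"
begin

definition tv_dist :: "'a measure \<Rightarrow> 'a measure \<Rightarrow> real" where
  "tv_dist P Q = (SUP A \<in> sets P. measure P A - measure Q A)"

definition rel_entropy :: "'a measure \<Rightarrow> 'a measure \<Rightarrow> ereal" where
  "rel_entropy P Q =
     (if absolutely_continuous Q P \<and> integrable P (entropy_density (exp 1) Q P)
      then ereal (KL_divergence (exp 1) Q P) else \<infinity>)"

definition Psi :: "ereal \<Rightarrow> real" where
  "Psi x = (if x = \<infinity> then 1
            else sqrt (min (real_of_ereal x / 2) (1 - exp (- real_of_ereal x))))"

definition pop_risk :: "('w \<Rightarrow> 'z \<Rightarrow> real) \<Rightarrow> 'z measure \<Rightarrow> 'w \<Rightarrow> real" where
  "pop_risk loss PZ w = (\<integral>z. loss w z \<partial>PZ)"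

definition emp_risk :: "('w \<Rightarrow> 'z \<Rightarrow> real) \<Rightarrow> nat \<Rightarrow> (nat \<Rightarrow> 'z) \<Rightarrow> 'w \<Rightarrow> real" where
  "emp_risk loss n s w = (\<Sum>i<n. loss w (s i)) / real n"

definition exp_gen :: "('w \<Rightarrow> 'z \<Rightarrow> real) \<Rightarrow> 'z measure \<Rightarrow> nat \<Rightarrow> ((nat \<Rightarrow> 'z) \<Rightarrow> 'w measure) \<Rightarrow> real" where
  "exp_gen loss PZ n K =
     (\<integral>s. (\<integral>w. pop_risk loss PZ w - emp_risk loss n s w \<partial>K s) \<partial>(PiM {..<n} (\<lambda>_. PZ)))"

end

(*
  By linearity, the expected generalization gap is the average over i of
  E_{Z_i}[ E_{P_W} loss(W, Z_i) - E_{P_{W|Z_i}} loss(W, Z_i) ]; the conditional-law hypothesis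
  identifies the joint law of (W, Z_i) on rectangles, hence on all bounded measurable functions.
  For a loss with values in [a, b], a staircase approximation by indicators bounds each inner
  difference by (b - a) TV(P_{W|Z_i}, P_W). Finally TV <= Psi(D): the Donsker-Varadhan lower bound
  for D, evaluated at two-valued test functions, gives Pinsker's inequality (via Hoeffding's lemma)
  and the Bretagnolle-Huber inequality (via the Bhattacharyya coefficient). On a Polish space both
  TV and D are suprema over countable families (finite unions of basic open sets, and step
  functions on them), which makes the integrands on the right-hand side measurable.
*)
theory Submission
  imports Defs
begin

section \<open>Pinsker and Bretagnolle--Huber for two-point distributions\<close>

lemma bhattacharyya_binary_sq_le:
  fixes p q :: real
  assumes "0 \<le> p" "p \<le> 1" "0 \<le> q" "q \<le> 1"
  shows "(sqrt (p * q) + sqrt ((1 - p) * (1 - q)))\<^sup>2 \<le> 1 - (p - q)\<^sup>2"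
proof -
  define X where "X = sqrt (q * (1 - q))"
  define Y where "Y = sqrt (p * (1 - p))"
  have "sqrt (p * q) * sqrt ((1 - p) * (1 - q)) = X * Y"
    unfolding X_def Y_def by (simp add: real_sqrt_mult[symmetric] algebra_simps)
  moreover have "2 * (X * Y) \<le> X\<^sup>2 + Y\<^sup>2"
    using sum_squares_bound[of X Y] by (simp add: algebra_simps)
  moreover have "X\<^sup>2 = q * (1 - q)" "Y\<^sup>2 = p * (1 - p)"
    "(sqrt (p * q))\<^sup>2 = p * q" "(sqrt ((1 - p) * (1 - q)))\<^sup>2 = (1 - p) * (1 - q)"
    using assms by (simp_all add: X_def Y_def)
  ultimately show ?thesis
    by (simp only: power2_sum) (simp add: power2_eq_square algebra_simps)
qed

lemma binary_kl_ge_bhattacharyya: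
  fixes p q :: real
  assumes p: "0 < p" "p < 1" and q: "0 < q" "q < 1"
  shows "- 2 * ln (sqrt (p * q) + sqrt ((1 - p) * (1 - q)))
           \<le> p * ln (p / q) + (1 - p) * ln ((1 - p) / (1 - q))"
proof -
  define u where "u = sqrt (q / p)"
  define v where "v = sqrt ((1 - q) / (1 - p))"
  define m where "m = p * u + (1 - p) * v"
  have uv: "u > 0" "v > 0" using p q by (simp_all add: u_def v_def)
  have m0: "m > 0" unfolding m_def using uv p by (intro add_pos_pos) auto
  have "p * q = p * p * (q / p)" "(1 - p) * (1 - q) = (1 - p) * (1 - p) * ((1 - q) / (1 - p))"
    using p by (simp_all add: field_simps)
  then have "sqrt (p * q) = sqrt (p * p) * u" "sqrt ((1 - p) * (1 - q)) = sqrt ((1 - p) * (1 - p)) * v"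
    unfolding u_def v_def by (metis real_sqrt_mult)+
  then have m_eq: "m = sqrt (p * q) + sqrt ((1 - p) * (1 - q))"
    using p by (simp add: m_def)
  \<comment> \<open>concavity of ln, via ln t \<le> t - 1 at t = u / m and t = v / m\<close>
  have "p * (ln u - ln m) + (1 - p) * (ln v - ln m) \<le> p * (u / m - 1) + (1 - p) * (v / m - 1)"
    using ln_le_minus_one[of "u / m"] ln_le_minus_one[of "v / m"] uv m0 p
    by (intro add_mono mult_left_mono) (auto simp: ln_div)
  also have "\<dots> = 0" using m0 by (simp add: m_def field_simps)
  finally have "p * ln u + (1 - p) * ln v \<le> ln m" by (simp add: algebra_simps)
  moreover have "ln u = - ln (p / q) / 2" "ln v = - ln ((1 - p) / (1 - q)) / 2"
    using p q by (simp_all add: u_def v_def ln_sqrt ln_div)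
  ultimately show ?thesis by (simp add: m_eq)
qed

text \<open>The Donsker--Varadhan functional of Bernoulli(p) against Bernoulli(q), evaluated at the test
  function taking the values \<open>\<alpha>\<close> and \<open>\<beta>\<close>.\<close>
definition bernoulli_dv :: "real \<Rightarrow> real \<Rightarrow> real \<Rightarrow> real \<Rightarrow> real" where
  "bernoulli_dv p q \<alpha> \<beta> = \<alpha> * p + \<beta> * (1 - p) - ln (exp \<alpha> * q + exp \<beta> * (1 - q))"

lemma pinsker_binary:
  fixes p q d :: real
  assumes dv: "\<And>\<alpha> \<beta>. bernoulli_dv p q \<alpha> \<beta> \<le> d"
    and q: "0 \<le> q" "q \<le> p"
  shows "2 * (p - q)\<^sup>2 \<le> d"
proof -
  define t where "t = 4 * (p - q)"
  have "t * p - ln (1 + q * (exp t - 1)) \<le> d"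
    using dv[of t 0] by (simp add: bernoulli_dv_def algebra_simps)
  moreover have "- t * q + ln (1 + q * (exp t - 1)) \<le> t\<^sup>2 / 8"
    using Hoeffdings_lemma_aux[of t q] q by (simp add: t_def)
  moreover have "t * (p - q) - t\<^sup>2 / 8 = 2 * (p - q)\<^sup>2"
    by (simp add: t_def power2_eq_square field_simps)
  ultimately show ?thesis by (simp add: algebra_simps)
qed

lemma bretagnolle_huber_binary:
  fixes p q d :: real
  assumes dv: "\<And>\<alpha> \<beta>. bernoulli_dv p q \<alpha> \<beta> \<le> d"
    and pq: "0 < q" "q < p" "p \<le> 1"
  shows "- ln (1 - (p - q)\<^sup>2) \<le> d"
proof (cases "p = 1")
  case True
  have "1 - (p - q)\<^sup>2 = q * (2 - q)"
    using True by (simp add: power2_eq_square algebra_simps)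
  moreover have "ln (1 / q) - ln (2 - q) \<le> d"
    using dv[of "ln (1 / q)" 0] True pq by (simp add: bernoulli_dv_def)
  ultimately show ?thesis using pq by (simp add: ln_mult ln_div)
next
  case False
  define m where "m = sqrt (p * q) + sqrt ((1 - p) * (1 - q))"
  have m0: "m > 0" using pq by (simp add: m_def add_pos_nonneg)
  have "ln (m\<^sup>2) \<le> ln (1 - (p - q)\<^sup>2)"
    using bhattacharyya_binary_sq_le[of p q] pq m0 by (intro ln_mono) (auto simp: m_def)
  then have "- ln (1 - (p - q)\<^sup>2) \<le> - 2 * ln m"
    using m0 by (simp add: ln_realpow)
  also have "\<dots> \<le> p * ln (p / q) + (1 - p) * ln ((1 - p) / (1 - q))"
    unfolding m_def using False pq by (intro binary_kl_ge_bhattacharyya) auto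
  also have "\<dots> \<le> d"
    using dv[of "ln (p / q)" "ln ((1 - p) / (1 - q))"] False pq by (simp add: bernoulli_dv_def mult.commute)
  finally show ?thesis .
qed

lemma le_Psi_of_binary_dv_bound:
  fixes p q d :: real
  assumes dv: "\<And>\<alpha> \<beta>. bernoulli_dv p q \<alpha> \<beta> \<le> d"
    and pq: "0 \<le> q" "p \<le> 1"
  shows "p - q \<le> Psi (ereal d)"
proof -
  have d0: "0 \<le> d" using dv[of 0 0] by (simp add: bernoulli_dv_def)
  have Psi_eq: "Psi (ereal d) = sqrt (min (d / 2) (1 - exp (- d)))"
    by (simp add: Psi_def)
  show ?thesis
  proof (cases "p \<le> q")
    case True
    moreover have "0 \<le> sqrt (min (d / 2) (1 - exp (- d)))" using d0 by simp
    ultimately show ?thesis unfolding Psi_eq by linarith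
  next
    case False
    have "q > 0"
    proof (rule ccontr)
      assume "\<not> q > 0"
      then have "q = 0" using pq by simp
      \<comment> \<open>with \<open>q = 0\<close> the hypothesis says \<open>t * p \<le> d\<close> for every \<open>t\<close>\<close>
      then have "(d + 1) / p * p \<le> d" using dv[of "(d + 1) / p" 0] by (simp add: bernoulli_dv_def)
      then show False using False \<open>q = 0\<close> by simp
    qed
    have "(p - q)\<^sup>2 < 1"
      using False pq \<open>q > 0\<close> by (simp add: power_less_one_iff abs_less_iff)
    moreover have "- ln (1 - (p - q)\<^sup>2) \<le> d"
      using bretagnolle_huber_binary[OF dv] False pq \<open>q > 0\<close> by simp
    ultimately have "exp (- d) \<le> 1 - (p - q)\<^sup>2"
      by (metis diff_gt_0_iff_gt exp_le_cancel_iff exp_ln minus_le_iff)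
    moreover have "2 * (p - q)\<^sup>2 \<le> d"
      using pinsker_binary[OF dv] False pq by simp
    ultimately have "(p - q)\<^sup>2 \<le> min (d / 2) (1 - exp (- d))" by simp
    then show ?thesis unfolding Psi_eq by (rule real_le_rsqrt)
  qed
qed

section \<open>Total variation\<close>

lemma integrable_bounded:
  fixes f :: "'a \<Rightarrow> real"
  assumes "finite_measure M" "f \<in> borel_measurable M" "\<And>x. x \<in> space M \<Longrightarrow> \<bar>f x\<bar> \<le> B"
  shows "integrable M f"
proof -
  interpret finite_measure M by fact
  show ?thesis by (rule integrable_const_bound[where B=B]) (use assms in auto)
qed

lemma abs_integral_le_bound:
  fixes f :: "'a \<Rightarrow> real"
  assumes "prob_space M" "f \<in> borel_measurable M" "\<And>x. x \<in> space M \<Longrightarrow> \<bar>f x\<bar> \<le> B"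
  shows "\<bar>\<integral>x. f x \<partial>M\<bar> \<le> B"
proof -
  interpret prob_space M by fact
  have "integrable M f" by (rule integrable_bounded[OF finite_measure_axioms assms(2,3)])
  then have "\<bar>\<integral>x. f x \<partial>M\<bar> \<le> (\<integral>x. B \<partial>M)"
    using assms(3) by (intro order.trans[OF integral_abs_bound] integral_mono) auto
  then show ?thesis by (simp add: prob_space)
qed

lemma bdd_above_measure_diff:
  assumes "prob_space P"
  shows "bdd_above ((\<lambda>A. measure P A - measure Q A) ` X)"
proof (rule bdd_aboveI[where M=1])
  fix y assume "y \<in> (\<lambda>A. measure P A - measure Q A) ` X"
  then obtain A where "y = measure P A - measure Q A" by auto
  then show "y \<le> 1"
    using prob_space.prob_le_1[OF assms, of A] measure_nonneg[of Q A] by linarith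
qed

lemma measure_diff_le_tv_dist:
  assumes "prob_space P" "A \<in> sets P"
  shows "measure P A - measure Q A \<le> tv_dist P Q"
  unfolding tv_dist_def by (rule cSUP_upper[OF assms(2) bdd_above_measure_diff[OF assms(1)]])

lemma tv_dist_nonneg: "prob_space P \<Longrightarrow> 0 \<le> tv_dist P Q"
  using measure_diff_le_tv_dist[of P "{}" Q] by simp

lemma tv_dist_le_one:
  assumes "prob_space P"
  shows "tv_dist P Q \<le> 1"
  unfolding tv_dist_def
proof (rule cSUP_least)
  fix A show "measure P A - measure Q A \<le> 1"
    using prob_space.prob_le_1[OF assms, of A] measure_nonneg[of Q A] by linarith
qed (use sets.empty_sets in blast)

lemma staircase_bounds:
  fixes c y :: real and k :: nat
  assumes k: "0 < k" and y: "0 \<le> y" "y \<le> c"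
  defines "s \<equiv> c / k * card {j \<in> {1..k}. real j * c / k \<le> y}"
  shows "s \<le> y" "y \<le> s + c / k"
proof -
  have "s \<le> y \<and> y \<le> s + c / k"
  proof (cases "c = 0")
    case True
    then have "s = 0" by (simp only: s_def True div_0 mult_zero_left)
    then show ?thesis using True y by simp
  next
    case False
    then have c: "c > 0" using y by simp
    define m where "m = nat \<lfloor>k * y / c\<rfloor>"
    have step_iff: "real j * c / k \<le> y \<longleftrightarrow> j \<le> m" for j
    proof -
      have "real j * c / k \<le> y \<longleftrightarrow> real j \<le> k * y / c" using c k by (simp add: field_simps)
      also have "\<dots> \<longleftrightarrow> j \<le> m" using c y by (simp add: m_def le_nat_iff le_floor_iff)
      finally show ?thesis .
    qed
    moreover have "m \<le> k"
    proof -
      have "k * y / c \<le> k" using c y by (simp add: divide_le_eq mult_left_mono)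
      then have "\<lfloor>k * y / c\<rfloor> \<le> int k" by (metis floor_mono floor_of_nat)
      then show ?thesis by (simp add: m_def)
    qed
    ultimately have "{j \<in> {1..k}. real j * c / k \<le> y} = {1..m}"
      by (simp only: step_iff) auto
    then have s_eq: "s = c / k * m" by (simp only: s_def card_atLeastAtMost diff_Suc_1)
    have "0 \<le> k * y / c" using c y by simp
    then have "real m = \<lfloor>k * y / c\<rfloor>" by (simp add: m_def)
    then have m_le: "m \<le> k * y / c" and m_ge: "k * y / c \<le> m + 1" by linarith+
    have ck: "c / k \<ge> 0" and y_eq: "c / k * (k * y / c) = y" using c k by simp_all
    have "s \<le> y" using mult_left_mono[OF m_le ck] unfolding s_eq y_eq .
    moreover have "y \<le> s + c / k"
      using mult_left_mono[OF m_ge ck] unfolding y_eq by (simp add: s_eq distrib_left)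
    ultimately show ?thesis by simp
  qed
  then show "s \<le> y" "y \<le> s + c / k" by auto
qed

lemma integral_staircase_bounds:
  fixes g :: "'a \<Rightarrow> real" and k :: nat
  assumes M: "prob_space M" and g[measurable]: "g \<in> borel_measurable M"
    and bnd: "\<And>x. x \<in> space M \<Longrightarrow> g x \<in> {a..b}" and k: "0 < k"
  defines "A \<equiv> \<lambda>j. {x \<in> space M. real j * (b - a) / k \<le> g x - a}"
  shows "(b - a) / k * (\<Sum>j\<in>{1..k}. measure M (A j)) \<le> (\<integral>x. g x \<partial>M) - a"
    and "(\<integral>x. g x \<partial>M) - a \<le> (b - a) / k * (\<Sum>j\<in>{1..k}. measure M (A j)) + (b - a) / k"
proof -
  interpret M: prob_space M by fact
  define S where "S x = (b - a) / k * (\<Sum>j\<in>{1..k}. indicator (A j) x)" for x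
  have [measurable]: "A j \<in> sets M" for j unfolding A_def by measurable
  have S_bounds: "S x \<le> g x - a" "g x - a \<le> S x + (b - a) / k" if x: "x \<in> space M" for x
  proof -
    have "(\<Sum>j\<in>{1..k}. indicator (A j) x :: real)
        = (\<Sum>j\<in>{1..k}. if real j * (b - a) / k \<le> g x - a then 1 else 0)"
      using x by (intro sum.cong) (auto simp: A_def)
    also have "\<dots> = card {j \<in> {1..k}. real j * (b - a) / k \<le> g x - a}"
      by (simp add: sum.inter_filter[symmetric])
    finally show "S x \<le> g x - a" "g x - a \<le> S x + (b - a) / k"
      using staircase_bounds[OF k, of "g x - a" "b - a"] bnd[OF x] by (simp_all add: S_def)
  qed
  have int_S: "integrable M S" and S_eq: "(\<integral>x. S x \<partial>M) = (b - a) / k * (\<Sum>j\<in>{1..k}. measure M (A j))"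
    unfolding S_def by (simp_all add: integral_sum M.emeasure_eq_measure)
  have int_g: "integrable M g"
    using bnd by (intro integrable_bounded[where B="\<bar>a\<bar> + \<bar>b\<bar>"]) (fastforce simp: abs_le_iff)+
  have "(\<integral>x. S x \<partial>M) \<le> (\<integral>x. g x - a \<partial>M)"
    by (rule integral_mono) (use int_g int_S S_bounds in auto)
  moreover have "(\<integral>x. g x - a \<partial>M) \<le> (\<integral>x. S x + (b - a) / k \<partial>M)"
    by (rule integral_mono) (use int_g int_S S_bounds in auto)
  ultimately show "(b - a) / k * (\<Sum>j\<in>{1..k}. measure M (A j)) \<le> (\<integral>x. g x \<partial>M) - a"
    and "(\<integral>x. g x \<partial>M) - a \<le> (b - a) / k * (\<Sum>j\<in>{1..k}. measure M (A j)) + (b - a) / k"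
    using int_g int_S by (simp_all add: S_eq M.prob_space)
qed

lemma integral_diff_le_tv_dist_plus:
  fixes g :: "'a \<Rightarrow> real" and k :: nat
  assumes P: "prob_space P" and Q: "prob_space Q" and sets_eq: "sets P = sets Q"
    and g[measurable]: "g \<in> borel_measurable P"
    and bnd: "\<And>x. x \<in> space P \<Longrightarrow> g x \<in> {a..b}" and k: "0 < k"
  shows "(\<integral>x. g x \<partial>P) - (\<integral>x. g x \<partial>Q) \<le> (b - a) * tv_dist P Q + (b - a) / k"
proof -
  define A where "A j = {x \<in> space P. real j * (b - a) / k \<le> g x - a}" for j :: nat
  have sp: "space Q = space P" using sets_eq_imp_space_eq[OF sets_eq] by simp
  have gQ: "g \<in> borel_measurable Q" using sets_eq by (simp cong: measurable_cong_sets)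
  have ab: "0 \<le> b - a" using bnd prob_space.not_empty[OF P] by fastforce
  have "(\<integral>x. g x \<partial>P) - (\<integral>x. g x \<partial>Q)
      \<le> (b - a) / k * ((\<Sum>j\<in>{1..k}. measure P (A j)) - (\<Sum>j\<in>{1..k}. measure Q (A j))) + (b - a) / k"
    using integral_staircase_bounds(2)[OF P g bnd k] integral_staircase_bounds(1)[OF Q gQ, of a b k] bnd k
    by (simp add: A_def sp right_diff_distrib)
  also have "\<dots> \<le> (b - a) / k * (k * tv_dist P Q) + (b - a) / k"
  proof -
    have "A j \<in> sets P" for j unfolding A_def by measurable
    then have "(\<Sum>j\<in>{1..k}. measure P (A j) - measure Q (A j)) \<le> (\<Sum>j\<in>{1..k}. tv_dist P Q)"
      by (intro sum_mono measure_diff_le_tv_dist[OF P])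
    then show ?thesis using ab by (intro add_right_mono mult_left_mono) (auto simp: sum_subtractf)
  qed
  also have "\<dots> = (b - a) * tv_dist P Q + (b - a) / k" using k by simp
  finally show ?thesis .
qed

lemma integral_diff_le_tv_dist:
  fixes g :: "'a \<Rightarrow> real"
  assumes "prob_space P" "prob_space Q" "sets P = sets Q" "g \<in> borel_measurable P"
    and "\<And>x. x \<in> space P \<Longrightarrow> g x \<in> {a..b}"
  shows "(\<integral>x. g x \<partial>P) - (\<integral>x. g x \<partial>Q) \<le> (b - a) * tv_dist P Q"
proof (rule LIMSEQ_le_const)
  show "(\<lambda>k. (b - a) * tv_dist P Q + (b - a) / real k) \<longlonglongrightarrow> (b - a) * tv_dist P Q"
    using tendsto_add[OF tendsto_const lim_const_over_n] by simp
  show "\<exists>N. \<forall>k\<ge>N. (\<integral>x. g x \<partial>P) - (\<integral>x. g x \<partial>Q) \<le> (b - a) * tv_dist P Q + (b - a) / real k"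
    using integral_diff_le_tv_dist_plus[OF assms] by (intro exI[of _ 1]) auto
qed

lemma abs_integral_diff_le_tv_dist:
  fixes g :: "'a \<Rightarrow> real"
  assumes P: "prob_space P" and Q: "prob_space Q" and sets_eq: "sets P = sets Q"
    and g: "g \<in> borel_measurable P" and bnd: "\<And>x. x \<in> space P \<Longrightarrow> g x \<in> {a..b}"
  shows "\<bar>(\<integral>x. g x \<partial>P) - (\<integral>x. g x \<partial>Q)\<bar> \<le> (b - a) * tv_dist P Q"
proof -
  have "(\<integral>x. - g x \<partial>P) - (\<integral>x. - g x \<partial>Q) \<le> (- a - - b) * tv_dist P Q"
    using bnd by (intro integral_diff_le_tv_dist[OF P Q sets_eq]) (auto simp: g)
  then show ?thesis using integral_diff_le_tv_dist[OF assms] by (simp add: abs_le_iff)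
qed

section \<open>The Donsker--Varadhan variational formula\<close>

definition donsker_varadhan :: "'a measure \<Rightarrow> 'a measure \<Rightarrow> ('a \<Rightarrow> real) \<Rightarrow> real" where
  "donsker_varadhan P Q g = (\<integral>x. g x \<partial>P) - ln (\<integral>x. exp (g x) \<partial>Q)"

lemma entropy_density_exp_1:
  "entropy_density (exp 1) M N = (\<lambda>x. ln (enn2real (RN_deriv M N x)))"
  by (simp add: entropy_density_def log_def fun_eq_iff)

lemma rel_entropy_absolutely_continuous:
  assumes "absolutely_continuous Q P"
  shows "rel_entropy P Q =
    (if integrable P (\<lambda>x. ln (enn2real (RN_deriv Q P x)))
     then ereal (\<integral>x. ln (enn2real (RN_deriv Q P x)) \<partial>P) else \<infinity>)"
  using assms by (simp add: rel_entropy_def KL_divergence_def entropy_density_exp_1)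

lemma AE_RN_deriv_pos:
  assumes P: "prob_space P" and Q: "prob_space Q" and sets_eq: "sets P = sets Q"
    and ac: "absolutely_continuous Q P"
  shows "AE x in P. 0 < enn2real (RN_deriv Q P x)"
proof -
  interpret P: prob_space P by fact
  interpret Q: prob_space Q by fact
  have "AE x in Q. RN_deriv Q P x \<noteq> \<infinity>"
    using ac sets_eq by (intro Q.RN_deriv_finite) (auto simp: P.sigma_finite_measure)
  then have "AE x in P. RN_deriv Q P x \<noteq> \<infinity>"
    by (rule absolutely_continuous_AE[OF sets_eq ac])
  moreover have "AE x in P. RN_deriv Q P x \<noteq> 0"
  proof -
    have dens: "density Q (RN_deriv Q P) = P" using Q.density_RN_deriv[OF ac] sets_eq by simp
    have "AE x in density Q (RN_deriv Q P). RN_deriv Q P x \<noteq> 0"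
      by (subst AE_density) auto
    then show ?thesis by (simp only: dens)
  qed
  ultimately show ?thesis
    by eventually_elim (auto simp: enn2real_positive_iff less_top zero_less_iff_neq_zero)
qed

lemma integral_divide_RN_deriv_le:
  assumes P: "prob_space P" and Q: "prob_space Q" and sets_eq: "sets P = sets Q"
    and ac: "absolutely_continuous Q P"
    and h[measurable]: "h \<in> borel_measurable Q" and h0: "\<And>x. 0 \<le> h x" and int_h: "integrable Q h"
  shows "integrable P (\<lambda>x. h x / enn2real (RN_deriv Q P x))"
    and "(\<integral>x. h x / enn2real (RN_deriv Q P x) \<partial>P) \<le> (\<integral>x. h x \<partial>Q)"
proof -
  interpret Q: prob_space Q by fact
  have [measurable]: "RN_deriv Q P \<in> borel_measurable P" "h \<in> borel_measurable P"
    using sets_eq by (simp_all cong: measurable_cong_sets)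
  have "(\<integral>\<^sup>+x. ennreal (h x / enn2real (RN_deriv Q P x)) \<partial>P)
      = (\<integral>\<^sup>+x. RN_deriv Q P x * ennreal (h x / enn2real (RN_deriv Q P x)) \<partial>Q)"
    using ac sets_eq by (intro Q.RN_deriv_nn_integral) auto
  also have "\<dots> \<le> (\<integral>\<^sup>+x. ennreal (h x) \<partial>Q)"
  proof (intro nn_integral_mono)
    fix x
    show "RN_deriv Q P x * ennreal (h x / enn2real (RN_deriv Q P x)) \<le> ennreal (h x)"
    proof (cases "RN_deriv Q P x")
      case (real t)
      then show ?thesis
        by (cases "t = 0") (auto simp: ennreal_mult''[symmetric] h0)
    qed simp
  qed
  also have "\<dots> = ennreal (\<integral>x. h x \<partial>Q)" using int_h h0 by (intro nn_integral_eq_integral) auto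
  finally have nn: "(\<integral>\<^sup>+x. ennreal (h x / enn2real (RN_deriv Q P x)) \<partial>P) \<le> ennreal (\<integral>x. h x \<partial>Q)" .
  then show "integrable P (\<lambda>x. h x / enn2real (RN_deriv Q P x))"
    using h0 by (intro integrableI_nonneg) (auto intro: le_less_trans)
  have "(\<integral>x. h x / enn2real (RN_deriv Q P x) \<partial>P) = enn2real (\<integral>\<^sup>+x. ennreal (h x / enn2real (RN_deriv Q P x)) \<partial>P)"
    using h0 by (intro integral_eq_nn_integral) auto
  also have "\<dots> \<le> (\<integral>x. h x \<partial>Q)"
    using nn h0 by (intro enn2real_leI) auto
  finally show "(\<integral>x. h x / enn2real (RN_deriv Q P x) \<partial>P) \<le> (\<integral>x. h x \<partial>Q)" .
qed

lemma donsker_varadhan_le_rel_entropy: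
  assumes P: "prob_space P" and Q: "prob_space Q" and sets_eq: "sets P = sets Q"
    and g[measurable]: "g \<in> borel_measurable Q" and bnd: "\<And>x. \<bar>g x\<bar> \<le> B"
  shows "ereal (donsker_varadhan P Q g) \<le> rel_entropy P Q"
proof (cases "absolutely_continuous Q P \<and> integrable P (entropy_density (exp 1) Q P)")
  case True
  interpret P: prob_space P by fact
  interpret Q: prob_space Q by fact
  define f where "f x = enn2real (RN_deriv Q P x)" for x
  define Z where "Z = (\<integral>x. exp (g x) \<partial>Q)"
  define r where "r x = exp (g x) / Z / f x" for x
  have ac: "absolutely_continuous Q P" and int_ln: "integrable P (\<lambda>x. ln (f x))"
    using True by (simp_all add: f_def entropy_density_exp_1)
  have gP[measurable]: "g \<in> borel_measurable P" using sets_eq by (simp cong: measurable_cong_sets)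
  have [measurable]: "RN_deriv Q P \<in> borel_measurable P"
    using sets_eq by (simp cong: measurable_cong_sets)
  have int_exp: "integrable Q (\<lambda>x. exp (g x))"
    using bnd by (intro integrable_bounded[where B="exp B"]) (auto simp: abs_le_iff)
  have "- B \<le> g x" for x using bnd[of x] by (simp add: abs_le_iff)
  then have "(\<integral>x. exp (- B) \<partial>Q) \<le> Z"
    unfolding Z_def by (intro integral_mono int_exp) auto
  then have Z0: "0 < Z" by (simp add: Q.prob_space) (meson exp_gt_zero less_le_trans)
  have "integrable P r" "(\<integral>x. r x \<partial>P) \<le> (\<integral>x. exp (g x) / Z \<partial>Q)"
    unfolding r_def f_def using Z0 int_exp
    by (intro integral_divide_RN_deriv_le[OF P Q sets_eq ac]; simp)+
  then have int_r: "integrable P r" and int_r_le: "(\<integral>x. r x \<partial>P) \<le> 1"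
    using Z0 by (simp_all add: Z_def)
  \<comment> \<open>Gibbs' inequality: integrate ln r \<le> r - 1\<close>
  have "AE x in P. g x - ln (f x) - ln Z \<le> r x - 1"
    using AE_RN_deriv_pos[OF P Q sets_eq ac]
  proof eventually_elim
    case (elim x)
    then have "ln (r x) = g x - ln (f x) - ln Z"
      using Z0 by (simp add: r_def f_def ln_div ln_mult)
    moreover have "ln (r x) \<le> r x - 1" using elim Z0 by (intro ln_le_minus_one) (simp add: r_def f_def)
    ultimately show ?case by simp
  qed
  moreover have int_g: "integrable P g"
    using bnd by (intro integrable_bounded[where B=B]) auto
  ultimately have "(\<integral>x. g x - ln (f x) - ln Z \<partial>P) \<le> (\<integral>x. r x - 1 \<partial>P)"
    using int_ln int_r by (intro integral_mono_AE) auto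
  then have "(\<integral>x. g x \<partial>P) - (\<integral>x. ln (f x) \<partial>P) - ln Z \<le> 0"
    using int_g int_ln int_r int_r_le by (simp add: P.prob_space)
  then show ?thesis
    using ac int_ln by (simp add: rel_entropy_absolutely_continuous donsker_varadhan_def Z_def f_def)
qed (auto simp: rel_entropy_def)

lemma integral_two_level:
  assumes "prob_space M" "A \<in> sets M"
  shows "(\<integral>x. (if x \<in> A then \<alpha> else \<beta>) \<partial>M) = \<alpha> * measure M A + \<beta> * (1 - measure M A)"
proof -
  interpret prob_space M by fact
  have "(\<lambda>x. if x \<in> A then \<alpha> else \<beta>) = (\<lambda>x. \<beta> + (\<alpha> - \<beta>) * indicator A x)"
    by (auto simp: fun_eq_iff indicator_def)
  then show ?thesis
    using assms(2) by (simp add: prob_space emeasure_eq_measure algebra_simps)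
qed

lemma donsker_varadhan_two_level:
  assumes "prob_space P" "prob_space Q" "A \<in> sets P" "A \<in> sets Q"
  shows "donsker_varadhan P Q (\<lambda>x. if x \<in> A then \<alpha> else \<beta>) = bernoulli_dv (measure P A) (measure Q A) \<alpha> \<beta>"
proof -
  have "(\<lambda>x. exp (if x \<in> A then \<alpha> else \<beta>)) = (\<lambda>x. if x \<in> A then exp \<alpha> else exp \<beta>)"
    by auto
  then show ?thesis using assms by (simp add: donsker_varadhan_def bernoulli_dv_def integral_two_level)
qed

lemma bernoulli_dv_le_rel_entropy:
  assumes P: "prob_space P" and Q: "prob_space Q" and sets_eq: "sets P = sets Q" and A: "A \<in> sets P"
  shows "ereal (bernoulli_dv (measure P A) (measure Q A) \<alpha> \<beta>) \<le> rel_entropy P Q"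
proof -
  have "ereal (donsker_varadhan P Q (\<lambda>x. if x \<in> A then \<alpha> else \<beta>)) \<le> rel_entropy P Q"
    using A sets_eq by (intro donsker_varadhan_le_rel_entropy[OF P Q sets_eq, where B="\<bar>\<alpha>\<bar> + \<bar>\<beta>\<bar>"]) auto
  then show ?thesis using A sets_eq by (simp add: donsker_varadhan_two_level[OF P Q])
qed

lemma tv_dist_le_Psi:
  assumes P: "prob_space P" and Q: "prob_space Q" and sets_eq: "sets P = sets Q"
  shows "tv_dist P Q \<le> Psi (rel_entropy P Q)"
proof (cases "rel_entropy P Q = \<infinity>")
  case True
  then show ?thesis using tv_dist_le_one[OF P] by (simp add: Psi_def)
next
  case False
  then obtain d where d: "rel_entropy P Q = ereal d" by (auto simp: rel_entropy_def split: if_splits)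
  have "measure P A - measure Q A \<le> Psi (ereal d)" if A: "A \<in> sets P" for A
  proof (rule le_Psi_of_binary_dv_bound)
    show "bernoulli_dv (measure P A) (measure Q A) \<alpha> \<beta> \<le> d" for \<alpha> \<beta>
      using bernoulli_dv_le_rel_entropy[OF P Q sets_eq A] d by simp
  qed (auto simp: prob_space.prob_le_1[OF P])
  then show ?thesis unfolding tv_dist_def d by (intro cSUP_least) auto
qed

lemma borel_measurable_Psi: "Psi \<in> borel_measurable borel"
  unfolding Psi_def by measurable

lemma Psi_le_one: "Psi x \<le> 1"
proof -
  have "sqrt (min (real_of_ereal x / 2) (1 - exp (- real_of_ereal x))) \<le> sqrt 1"
    by (intro real_sqrt_le_mono) (simp add: min_le_iff_disj)
  then show ?thesis by (simp add: Psi_def)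
qed

lemma neg_mult_ln_le_one:
  fixes t :: real
  assumes "0 \<le> t"
  shows "- (t * ln t) \<le> 1"
proof (cases "t = 0")
  case False
  then have "- ln t \<le> 1 / t - 1"
    using assms ln_le_minus_one[of "1 / t"] by (simp add: ln_div)
  then have "t * (- ln t) \<le> t * (1 / t - 1)" using assms by (intro mult_left_mono)
  then show ?thesis using False assms by (simp add: algebra_simps)
qed simp

lemma integrable_RN_deriv_real:
  assumes P: "prob_space P" and Q: "prob_space Q" and sets_eq: "sets P = sets Q"
    and ac: "absolutely_continuous Q P"
  shows "integrable Q (\<lambda>x. enn2real (RN_deriv Q P x))" "(\<integral>x. enn2real (RN_deriv Q P x) \<partial>Q) \<le> 1"
proof -
  interpret P: prob_space P by fact
  interpret Q: prob_space Q by fact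
  have "(\<integral>\<^sup>+x. ennreal (enn2real (RN_deriv Q P x)) \<partial>Q) \<le> (\<integral>\<^sup>+x. RN_deriv Q P x * 1 \<partial>Q)"
    by (intro nn_integral_mono) (simp add: ennreal_enn2real_if)
  also have "\<dots> = (\<integral>\<^sup>+x. 1 \<partial>P)"
    using ac sets_eq by (intro Q.RN_deriv_nn_integral[symmetric]) auto
  finally have nn: "(\<integral>\<^sup>+x. ennreal (enn2real (RN_deriv Q P x)) \<partial>Q) \<le> 1"
    by (simp add: P.emeasure_space_1)
  then show "integrable Q (\<lambda>x. enn2real (RN_deriv Q P x))"
    by (intro integrableI_nonneg) (auto simp: top.not_eq_extremum intro: order.strict_trans1[OF _ ennreal_one_less_top])
  have "(\<integral>x. enn2real (RN_deriv Q P x) \<partial>Q) = enn2real (\<integral>\<^sup>+x. ennreal (enn2real (RN_deriv Q P x)) \<partial>Q)"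
    by (intro integral_eq_nn_integral) auto
  also have "\<dots> \<le> 1" using nn by (intro enn2real_leI) auto
  finally show "(\<integral>x. enn2real (RN_deriv Q P x) \<partial>Q) \<le> 1" .
qed

lemma integrable_neg_log_RN_deriv:
  assumes P: "prob_space P" and Q: "prob_space Q" and sets_eq: "sets P = sets Q"
    and ac: "absolutely_continuous Q P"
  shows "integrable P (\<lambda>x. max (- ln (enn2real (RN_deriv Q P x))) 0)"
proof -
  interpret P: prob_space P by fact
  interpret Q: prob_space Q by fact
  have [measurable]: "RN_deriv Q P \<in> borel_measurable P"
    using sets_eq by (simp cong: measurable_cong_sets)
  have "(\<integral>\<^sup>+x. ennreal (max (- ln (enn2real (RN_deriv Q P x))) 0) \<partial>P)
      = (\<integral>\<^sup>+x. RN_deriv Q P x * ennreal (max (- ln (enn2real (RN_deriv Q P x))) 0) \<partial>Q)"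
    using ac sets_eq by (intro Q.RN_deriv_nn_integral) auto
  also have "\<dots> \<le> (\<integral>\<^sup>+x. 1 \<partial>Q)"
  proof (intro nn_integral_mono)
    fix x
    show "RN_deriv Q P x * ennreal (max (- ln (enn2real (RN_deriv Q P x))) 0) \<le> 1"
    proof (cases "RN_deriv Q P x")
      case (real t)
      then have le: "t * max (- ln t) 0 \<le> 1" using neg_mult_ln_le_one[of t] by (auto simp: max_def)
      have "RN_deriv Q P x * ennreal (max (- ln (enn2real (RN_deriv Q P x))) 0) = ennreal (t * max (- ln t) 0)"
        using real by (simp add: ennreal_mult)
      then show ?thesis using le by (simp only: ennreal_le_1)
    qed simp
  qed
  finally show ?thesis
    by (intro integrableI_nonneg) (auto simp: Q.emeasure_space_1 top.not_eq_extremum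
        intro: order.strict_trans1[OF _ ennreal_one_less_top])
qed

text \<open>Since \<open>ln 0 = 0\<close> in Isabelle, the clipped value \<open>-m\<close> of \<open>ln 0 = -\<infinity>\<close> is set explicitly.\<close>
definition clamped_ln :: "real \<Rightarrow> real \<Rightarrow> real" where
  "clamped_ln m t = (if 0 < t then max (- m) (min m (ln t)) else - m)"

lemma abs_clamped_ln_le: "0 \<le> m \<Longrightarrow> \<bar>clamped_ln m t\<bar> \<le> m"
  by (auto simp: clamped_ln_def)

lemma exp_clamped_ln_le:
  assumes "0 \<le> t"
  shows "exp (clamped_ln m t) \<le> t + exp (- m)"
proof (cases "0 < t")
  case True
  have "clamped_ln m t \<le> max (- m) (ln t)" using True by (auto simp: clamped_ln_def)
  then have "exp (clamped_ln m t) \<le> exp (max (- m) (ln t))" by simp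
  also have "\<dots> \<le> t + exp (- m)" using True by (auto simp: max_def)
  finally show ?thesis .
qed (use assms in \<open>simp add: clamped_ln_def\<close>)

lemma donsker_varadhan_clamped_ln_RN_deriv:
  fixes m :: real
  assumes P: "prob_space P" and Q: "prob_space Q" and sets_eq: "sets P = sets Q"
    and ac: "absolutely_continuous Q P" and m: "0 \<le> m"
  defines "f \<equiv> \<lambda>x. enn2real (RN_deriv Q P x)"
  shows "(\<integral>x. min (max (ln (f x)) 0) m \<partial>P) - (\<integral>x. max (- ln (f x)) 0 \<partial>P) - exp (- m)
           \<le> donsker_varadhan P Q (\<lambda>x. clamped_ln m (f x))"
proof -
  interpret P: prob_space P by fact
  interpret Q: prob_space Q by fact
  define g where "g x = clamped_ln m (f x)" for x
  define Z where "Z = (\<integral>x. exp (g x) \<partial>Q)"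
  have [measurable]: "RN_deriv Q P \<in> borel_measurable P"
    using sets_eq by (simp cong: measurable_cong_sets)
  have f_meas[measurable]: "f \<in> borel_measurable P" unfolding f_def by measurable
  have g_meas[measurable]: "g \<in> borel_measurable Q" "g \<in> borel_measurable P"
    unfolding g_def f_def clamped_ln_def by measurable
  have g_bnd: "\<bar>g x\<bar> \<le> m" for x unfolding g_def using m by (rule abs_clamped_ln_le)
  have g_ge: "- m \<le> g x" for x using g_bnd[of x] by (simp add: abs_le_iff)
  have int_exp: "integrable Q (\<lambda>x. exp (g x))"
    using g_bnd by (intro integrable_bounded[where B="exp m"]) (auto simp: abs_le_iff)
  have "(\<integral>x. exp (- m) \<partial>Q) \<le> Z"
    unfolding Z_def using g_ge by (intro integral_mono int_exp) auto
  then have Z0: "0 < Z" by (simp add: Q.prob_space) (meson exp_gt_zero less_le_trans)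
  have "Z \<le> (\<integral>x. f x + exp (- m) \<partial>Q)"
    unfolding Z_def g_def f_def
    using integrable_RN_deriv_real[OF P Q sets_eq ac] int_exp
    by (intro integral_mono exp_clamped_ln_le) (auto simp: g_def f_def)
  also have "\<dots> \<le> 1 + exp (- m)"
    using integrable_RN_deriv_real[OF P Q sets_eq ac] by (simp add: f_def Q.prob_space)
  finally have "ln Z \<le> ln (1 + exp (- m))" using Z0 by simp
  also have "\<dots> \<le> exp (- m)" by (intro ln_add_one_self_le_self) simp
  finally have lnZ: "ln Z \<le> exp (- m)" .
  have int_min: "integrable P (\<lambda>x. min (max (ln (f x)) 0) m)" and int_g: "integrable P g"
    using g_bnd m by (auto intro!: integrable_bounded[where B=m])
  have int_neg: "integrable P (\<lambda>x. max (- ln (f x)) 0)"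
    unfolding f_def by (rule integrable_neg_log_RN_deriv[OF P Q sets_eq ac])
  have "AE x in P. min (max (ln (f x)) 0) m - max (- ln (f x)) 0 \<le> g x"
    using AE_RN_deriv_pos[OF P Q sets_eq ac]
    by eventually_elim (auto simp: g_def f_def clamped_ln_def)
  then have "(\<integral>x. min (max (ln (f x)) 0) m - max (- ln (f x)) 0 \<partial>P) \<le> (\<integral>x. g x \<partial>P)"
    using int_min int_neg int_g by (intro integral_mono_AE) auto
  then have "(\<integral>x. min (max (ln (f x)) 0) m \<partial>P) - (\<integral>x. max (- ln (f x)) 0 \<partial>P) \<le> (\<integral>x. g x \<partial>P)"
    using int_min int_neg by simp
  then show ?thesis using lnZ by (simp add: donsker_varadhan_def g_def Z_def)
qed

lemma tendsto_integral_min: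
  fixes f :: "'a \<Rightarrow> real"
  assumes M: "finite_measure M" and f[measurable]: "f \<in> borel_measurable M" and f0: "\<And>x. 0 \<le> f x"
  shows "(\<lambda>m. ennreal (\<integral>x. min (f x) (real m) \<partial>M)) \<longlonglongrightarrow> (\<integral>\<^sup>+x. ennreal (f x) \<partial>M)"
proof -
  have "ennreal (\<integral>x. min (f x) (real m) \<partial>M) = (\<integral>\<^sup>+x. ennreal (min (f x) (real m)) \<partial>M)" for m
    using f0 by (intro nn_integral_eq_integral[symmetric] integrable_bounded[OF M, where B="real m"]) auto
  moreover have "(\<lambda>m. \<integral>\<^sup>+x. ennreal (min (f x) (real m)) \<partial>M) \<longlonglongrightarrow> (\<integral>\<^sup>+x. ennreal (f x) \<partial>M)"
  proof (rule nn_integral_LIMSEQ)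
    show "incseq (\<lambda>m x. ennreal (min (f x) (real m)))"
      by (auto simp: incseq_def le_fun_def intro!: ennreal_leI)
    fix x
    have "f x \<le> real m" if "nat \<lceil>f x\<rceil> \<le> m" for m
      using real_nat_ceiling_ge[of "f x"] that by (meson of_nat_le_iff order.trans)
    then have "\<forall>\<^sub>F m in sequentially. ennreal (min (f x) (real m)) = ennreal (f x)"
      by (intro eventually_sequentiallyI[of "nat \<lceil>f x\<rceil>"]) (simp add: min_absorb1)
    then show "(\<lambda>m. ennreal (min (f x) (real m))) \<longlonglongrightarrow> ennreal (f x)"
      by (rule tendsto_eventually)
  qed simp
  ultimately show ?thesis by simp
qed

lemma eventually_less_integral_min_diff:
  fixes p :: "'a \<Rightarrow> real" and c y :: real
  assumes M: "finite_measure M" and p[measurable]: "p \<in> borel_measurable M" and p0: "\<And>x. 0 \<le> p x"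
    and y: "ereal y < (if integrable M p then ereal ((\<integral>x. p x \<partial>M) - c) else \<infinity>)"
  shows "\<forall>\<^sub>F m in sequentially. y < (\<integral>x. min (p x) (real m) \<partial>M) - c - exp (- real m)"
proof -
  have lim_p: "(\<lambda>m. ennreal (\<integral>x. min (p x) (real m) \<partial>M)) \<longlonglongrightarrow> (\<integral>\<^sup>+x. ennreal (p x) \<partial>M)"
    by (rule tendsto_integral_min[OF M p p0])
  have lim_exp: "(\<lambda>m::nat. exp (- real m)) \<longlonglongrightarrow> 0"
    using filterlim_compose[OF exp_at_bot filterlim_uminus_at_bot_at_top[THEN filterlim_compose,
          OF filterlim_real_sequentially]] .
  show ?thesis
  proof (cases "integrable M p")
    case True
    have "(\<integral>\<^sup>+x. ennreal (p x) \<partial>M) = ennreal (\<integral>x. p x \<partial>M)"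
      using True p0 by (intro nn_integral_eq_integral) auto
    then have "(\<lambda>m. \<integral>x. min (p x) (real m) \<partial>M) \<longlonglongrightarrow> (\<integral>x. p x \<partial>M)"
      using lim_p p0 by (intro tendsto_ennrealD) auto
    then have "(\<lambda>m. (\<integral>x. min (p x) (real m) \<partial>M) - c - exp (- real m)) \<longlonglongrightarrow> (\<integral>x. p x \<partial>M) - c - 0"
      by (intro tendsto_intros lim_exp)
    then show ?thesis using y True by (intro order_tendstoD(1)) auto
  next
    case False
    have "(\<integral>\<^sup>+x. ennreal (p x) \<partial>M) = \<infinity>"
    proof (rule ccontr)
      assume "(\<integral>\<^sup>+x. ennreal (p x) \<partial>M) \<noteq> \<infinity>"
      then have "integrable M p" using p0 by (intro integrableI_nonneg) (auto simp: less_top)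
      then show False using False by simp
    qed
    then have "\<forall>\<^sub>F m in sequentially. ennreal (max 0 (y + c + 1)) < ennreal (\<integral>x. min (p x) (real m) \<partial>M)"
      using lim_p by (intro order_tendstoD(1)) auto
    moreover have "\<forall>\<^sub>F m in sequentially. exp (- real m) < 1"
      using lim_exp by (rule order_tendstoD(2)) simp
    ultimately show ?thesis
    proof eventually_elim
      case (elim m)
      then have "y + c + 1 < (\<integral>x. min (p x) (real m) \<partial>M)"
        using ennreal_less_iff[of "max 0 (y + c + 1)"] by (auto simp del: ennreal_max_0)
      then show ?case using elim(2) by linarith
    qed
  qed
qed

lemma less_donsker_varadhan_clamped_ln_RN_deriv:
  assumes P: "prob_space P" and Q: "prob_space Q" and sets_eq: "sets P = sets Q"
    and ac: "absolutely_continuous Q P" and y: "ereal y < rel_entropy P Q"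
  shows "\<exists>m::nat. y < donsker_varadhan P Q (\<lambda>x. clamped_ln m (enn2real (RN_deriv Q P x)))"
proof -
  interpret P: prob_space P by fact
  define f where "f x = enn2real (RN_deriv Q P x)" for x
  define pos where "pos x = max (ln (f x)) 0" for x
  define neg where "neg x = max (- ln (f x)) 0" for x
  have [measurable]: "RN_deriv Q P \<in> borel_measurable P"
    using sets_eq by (simp cong: measurable_cong_sets)
  have pos_meas[measurable]: "pos \<in> borel_measurable P" unfolding pos_def f_def by measurable
  have int_neg: "integrable P neg"
    unfolding neg_def f_def by (rule integrable_neg_log_RN_deriv[OF P Q sets_eq ac])
  have ln_eq: "(\<lambda>x. ln (f x)) = (\<lambda>x. pos x - neg x)" and pos_eq: "pos = (\<lambda>x. ln (f x) + neg x)"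
    by (auto simp: pos_def neg_def)
  have int_iff: "integrable P (\<lambda>x. ln (f x)) \<longleftrightarrow> integrable P pos"
  proof
    assume "integrable P (\<lambda>x. ln (f x))"
    then show "integrable P pos" using int_neg unfolding pos_eq by (rule Bochner_Integration.integrable_add)
  next
    assume "integrable P pos"
    then show "integrable P (\<lambda>x. ln (f x))" using int_neg unfolding ln_eq by (rule Bochner_Integration.integrable_diff)
  qed
  have "rel_entropy P Q = (if integrable P (\<lambda>x. ln (f x)) then ereal (\<integral>x. ln (f x) \<partial>P) else \<infinity>)"
    using rel_entropy_absolutely_continuous[OF ac] by (simp add: f_def)
  also have "\<dots> = (if integrable P pos then ereal ((\<integral>x. pos x \<partial>P) - (\<integral>x. neg x \<partial>P)) else \<infinity>)"
    using int_neg by (simp only: int_iff) (auto simp: ln_eq)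
  finally have "rel_entropy P Q
      = (if integrable P pos then ereal ((\<integral>x. pos x \<partial>P) - (\<integral>x. neg x \<partial>P)) else \<infinity>)" .
  then have "\<forall>\<^sub>F m in sequentially. y < (\<integral>x. min (pos x) (real m) \<partial>P) - (\<integral>x. neg x \<partial>P) - exp (- real m)"
    using y by (intro eventually_less_integral_min_diff[OF P.finite_measure_axioms pos_meas]) (auto simp: pos_def)
  then obtain m :: nat where "y < (\<integral>x. min (pos x) (real m) \<partial>P) - (\<integral>x. neg x \<partial>P) - exp (- real m)"
    unfolding eventually_sequentially by blast
  also have "\<dots> \<le> donsker_varadhan P Q (\<lambda>x. clamped_ln m (f x))"
    unfolding pos_def neg_def f_def by (rule donsker_varadhan_clamped_ln_RN_deriv[OF P Q sets_eq ac]) simp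
  finally show ?thesis by (auto simp: f_def)
qed

lemma not_absolutely_continuous_witness:
  assumes "prob_space P" "sets P = sets Q" "\<not> absolutely_continuous Q P"
  obtains A where "A \<in> sets Q" "measure Q A = 0" "0 < measure P A"
proof -
  interpret P: prob_space P by fact
  obtain A where A: "A \<in> null_sets Q" "A \<notin> null_sets P"
    using assms(3) unfolding absolutely_continuous_def by auto
  then have "A \<in> sets P" "emeasure P A \<noteq> 0" using assms(2) by auto
  then have "0 < measure P A"
    by (simp add: P.emeasure_eq_measure zero_less_measure_iff)
  then show ?thesis using A by (intro that) (auto simp: measure_def)
qed

theorem rel_entropy_variational:
  assumes P: "prob_space P" and Q: "prob_space Q" and sets_eq: "sets P = sets Q"
  shows "rel_entropy P Q
    = (SUP g \<in> {g \<in> borel_measurable Q. \<exists>B. \<forall>x. \<bar>g x\<bar> \<le> B}. ereal (donsker_varadhan P Q g))"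
  (is "_ = (SUP g \<in> ?G. _)")
proof (rule antisym)
  show "(SUP g \<in> ?G. ereal (donsker_varadhan P Q g)) \<le> rel_entropy P Q"
    by (rule SUP_least) (auto intro: donsker_varadhan_le_rel_entropy[OF P Q sets_eq])
  show "rel_entropy P Q \<le> (SUP g \<in> ?G. ereal (donsker_varadhan P Q g))"
    unfolding le_SUP_iff
  proof (intro allI impI)
    fix y assume y: "y < rel_entropy P Q"
    show "\<exists>g\<in>?G. y < ereal (donsker_varadhan P Q g)"
    proof (cases y)
      case (real r)
      show ?thesis
      proof (cases "absolutely_continuous Q P")
        case True
        then obtain m :: nat where "r < donsker_varadhan P Q (\<lambda>x. clamped_ln m (enn2real (RN_deriv Q P x)))"
          using less_donsker_varadhan_clamped_ln_RN_deriv[OF P Q sets_eq _ y[unfolded real]] by blast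
        moreover have "(\<lambda>x. clamped_ln m (enn2real (RN_deriv Q P x))) \<in> borel_measurable Q"
          unfolding clamped_ln_def by measurable
        then have "(\<lambda>x. clamped_ln m (enn2real (RN_deriv Q P x))) \<in> ?G"
          using abs_clamped_ln_le[of "real m"] by auto
        ultimately show ?thesis using real by force
      next
        case False
        then obtain A where A: "A \<in> sets Q" "measure Q A = 0" "0 < measure P A"
          using not_absolutely_continuous_witness[OF P sets_eq] by blast
        \<comment> \<open>a large constant on a \<open>Q\<close>-null set that \<open>P\<close> charges\<close>
        define t where "t = (\<bar>r\<bar> + 1) / measure P A"
        have "donsker_varadhan P Q (\<lambda>x. if x \<in> A then t else 0) = \<bar>r\<bar> + 1"
          using A sets_eq by (simp add: donsker_varadhan_two_level[OF P Q] bernoulli_dv_def t_def)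
        moreover have "(\<lambda>x. if x \<in> A then t else 0) \<in> ?G"
          using A by (auto intro!: exI[of _ "\<bar>t\<bar>"])
        ultimately show ?thesis using real by (intro bexI[of _ "\<lambda>x. if x \<in> A then t else 0"]) auto
      qed
    next
      case MInf
      moreover have "(\<lambda>_. 0) \<in> ?G" by auto
      ultimately show ?thesis by force
    qed (use y in simp)
  qed
qed

section \<open>Countable reductions on Polish spaces\<close>

lemma countable_basis_enumeration:
  obtains U :: "nat \<Rightarrow> 'a::second_countable_topology set" where "topological_basis (range U)"
proof -
  obtain B :: "'a set set" where B: "countable B" "topological_basis B"
    using ex_countable_basis by blast
  have "B \<noteq> {}"
    using topological_basisE[OF B(2) open_UNIV UNIV_I] by blast
  then show ?thesis using B by (intro that[of "from_nat_into B"]) simp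
qed

definition basic_union :: "(nat \<Rightarrow> 'a set) \<Rightarrow> nat list \<Rightarrow> 'a set" where
  "basic_union U bs = (\<Union>i\<in>set bs. U i)"

lemma open_basic_union: "topological_basis (range U) \<Longrightarrow> open (basic_union U bs)"
  unfolding basic_union_def by (auto intro: topological_basis_open)

lemma measure_le_measure_symdiff:
  assumes "finite_measure M" "A \<in> sets M" "B \<in> sets M"
  shows "measure M A \<le> measure M B + measure M ((A - B) \<union> (B - A))"
proof -
  interpret finite_measure M by fact
  have "measure M A \<le> measure M (B \<union> ((A - B) \<union> (B - A)))"
    using assms by (intro finite_measure_mono) auto
  also have "\<dots> \<le> measure M B + measure M ((A - B) \<union> (B - A))"
    using assms by (intro measure_Un_le) auto
  finally show ?thesis .
qed

lemma open_superset_measure_diff_less: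
  fixes M :: "'a::polish_space measure"
  assumes M: "finite_measure M" "sets M = sets borel" and C: "C \<in> sets borel" and e: "0 < e"
  obtains V where "open V" "C \<subseteq> V" "measure M (V - C) < e"
proof -
  interpret finite_measure M by fact
  have "emeasure M C = (INF V \<in> {V. C \<subseteq> V \<and> open V}. emeasure M V)"
    using M C emeasure_finite by (intro outer_regular) auto
  moreover have "emeasure M C < emeasure M C + ennreal e"
    using e emeasure_finite[of C] by (simp add: less_top ennreal_less_iff)
  ultimately have "(INF V \<in> {V. C \<subseteq> V \<and> open V}. emeasure M V) < emeasure M C + ennreal e"
    by simp
  then obtain V where V: "C \<subseteq> V" "open V" "emeasure M V < emeasure M C + ennreal e"
    by (auto simp: INF_less_iff)
  have "V \<in> sets M" "C \<in> sets M" using V(2) M(2) C by auto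
  moreover from V(3) have "measure M V < measure M C + e"
    using e by (simp add: emeasure_eq_measure ennreal_plus[symmetric] ennreal_less_iff del: ennreal_plus)
  ultimately have "measure M (V - C) < e" using V(1) by (simp add: finite_measure_Diff)
  then show ?thesis using V by (intro that) auto
qed

lemma eventually_measure_diff_basic_union_less:
  fixes M :: "'a::topological_space measure"
  assumes U: "topological_basis (range U)" and M: "finite_measure M" "sets M = sets borel"
    and V: "open V" and e: "0 < e"
  shows "\<forall>\<^sub>F n in sequentially. measure M (V - basic_union U (filter (\<lambda>i. U i \<subseteq> V) [0..<n])) < e"
proof -
  interpret finite_measure M by fact
  define W where "W n = basic_union U (filter (\<lambda>i. U i \<subseteq> V) [0..<n])" for n
  have W_sub: "W n \<subseteq> V" for n by (auto simp: W_def basic_union_def)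
  have W_sets: "W n \<in> sets M" for n
    using open_basic_union[OF U] M(2) by (simp add: W_def)
  have "(\<Union>n. W n) = V"
  proof
    show "V \<subseteq> (\<Union>n. W n)"
    proof
      fix x assume "x \<in> V"
      then obtain i where "x \<in> U i" "U i \<subseteq> V"
        using topological_basisE[OF U V] by blast
      then have "x \<in> W (Suc i)" by (auto simp: W_def basic_union_def)
      then show "x \<in> (\<Union>n. W n)" by blast
    qed
  qed (use W_sub in auto)
  moreover have "incseq W"
    by (intro monoI) (auto simp: W_def basic_union_def intro: less_le_trans)
  moreover have "(\<lambda>n. measure M (W n)) \<longlonglongrightarrow> measure M (\<Union>n. W n)"
    using W_sets \<open>incseq W\<close> by (intro finite_Lim_measure_incseq) auto
  ultimately have "(\<lambda>n. measure M (W n)) \<longlonglongrightarrow> measure M V" by simp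
  then have "\<forall>\<^sub>F n in sequentially. measure M V - e < measure M (W n)"
    using e by (intro order_tendstoD) auto
  moreover have "measure M (V - W n) = measure M V - measure M (W n)" for n
    using W_sets W_sub V M(2) by (intro finite_measure_Diff) auto
  ultimately show ?thesis by (auto simp: W_def elim!: eventually_mono)
qed

lemma basic_union_approx:
  fixes M1 M2 :: "'a::polish_space measure"
  assumes U: "topological_basis (range U)"
    and M1: "finite_measure M1" "sets M1 = sets borel" and M2: "finite_measure M2" "sets M2 = sets borel"
    and C: "C \<in> sets borel" and e: "0 < e"
  obtains bs where "measure M1 ((C - basic_union U bs) \<union> (basic_union U bs - C)) < e"
    "measure M2 ((C - basic_union U bs) \<union> (basic_union U bs - C)) < e"
proof -
  interpret M1: finite_measure M1 by fact
  interpret M2: finite_measure M2 by fact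
  obtain V1 where V1: "open V1" "C \<subseteq> V1" "measure M1 (V1 - C) < e / 2"
    using open_superset_measure_diff_less[OF M1 C, of "e / 2"] e by auto
  obtain V2 where V2: "open V2" "C \<subseteq> V2" "measure M2 (V2 - C) < e / 2"
    using open_superset_measure_diff_less[OF M2 C, of "e / 2"] e by auto
  define V where "V = V1 \<inter> V2"
  have V: "open V" "C \<subseteq> V" using V1 V2 by (auto simp: V_def)
  have "measure M1 (V - C) \<le> measure M1 (V1 - C)" "measure M2 (V - C) \<le> measure M2 (V2 - C)"
    using V1 V2 M1 M2 C by (auto intro!: M1.finite_measure_mono M2.finite_measure_mono simp: V_def)
  then have VC: "measure M1 (V - C) < e / 2" "measure M2 (V - C) < e / 2"
    using V1 V2 by linarith+
  obtain n where n:
    "measure M1 (V - basic_union U (filter (\<lambda>i. U i \<subseteq> V) [0..<n])) < e / 2"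
    "measure M2 (V - basic_union U (filter (\<lambda>i. U i \<subseteq> V) [0..<n])) < e / 2"
    using eventually_conj[OF eventually_measure_diff_basic_union_less[OF U M1 V(1) half_gt_zero[OF e]]
        eventually_measure_diff_basic_union_less[OF U M2 V(1) half_gt_zero[OF e]]]
    unfolding eventually_sequentially by blast
  define W where "W = basic_union U (filter (\<lambda>i. U i \<subseteq> V) [0..<n])"
  have "W \<in> sets borel" unfolding W_def by (rule borel_open[OF open_basic_union[OF U]])
  moreover have "W \<subseteq> V" by (auto simp: W_def basic_union_def)
  ultimately have W: "W \<subseteq> V" "W \<in> sets borel" by auto
  \<comment> \<open>both halves of the symmetric difference lie in \<open>(V - W) \<union> (V - C)\<close>\<close>
  have symdiff: "measure M ((C - W) \<union> (W - C)) \<le> measure M (V - W) + measure M (V - C)"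
    if "finite_measure M" "sets M = sets borel" for M
  proof -
    interpret finite_measure M by fact
    have "measure M ((C - W) \<union> (W - C)) \<le> measure M ((V - W) \<union> (V - C))"
      using V W C that(2) by (intro finite_measure_mono) auto
    also have "\<dots> \<le> measure M (V - W) + measure M (V - C)"
      using V W C that(2) by (intro measure_Un_le) auto
    finally show ?thesis .
  qed
  show ?thesis
  proof (rule that[of "filter (\<lambda>i. U i \<subseteq> V) [0..<n]"], unfold W_def[symmetric])
    show "measure M1 ((C - W) \<union> (W - C)) < e"
      using symdiff[OF M1] n(1) VC(1) unfolding W_def[symmetric] by linarith
    show "measure M2 ((C - W) \<union> (W - C)) < e"
      using symdiff[OF M2] n(2) VC(2) unfolding W_def[symmetric] by linarith
  qed
qed

lemma tv_dist_eq_SUP_basic_union: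
  fixes P Q :: "'a::polish_space measure"
  assumes U: "topological_basis (range U)"
    and P: "prob_space P" "sets P = sets borel" and Q: "prob_space Q" "sets Q = sets borel"
  shows "tv_dist P Q = (SUP bs. measure P (basic_union U bs) - measure Q (basic_union U bs))"
proof (rule antisym)
  interpret P: prob_space P by fact
  interpret Q: prob_space Q by fact
  have bdd: "bdd_above (range (\<lambda>bs. measure P (basic_union U bs) - measure Q (basic_union U bs)))"
    using bdd_above_measure_diff[OF P(1), of Q "range (basic_union U)"] by (simp add: image_image)
  have U_sets: "basic_union U bs \<in> sets borel" for bs by (rule borel_open[OF open_basic_union[OF U]])
  show "tv_dist P Q \<le> (SUP bs. measure P (basic_union U bs) - measure Q (basic_union U bs))"
    unfolding tv_dist_def
  proof (rule cSUP_least)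
    fix A assume A: "A \<in> sets P"
    show "measure P A - measure Q A \<le> (SUP bs. measure P (basic_union U bs) - measure Q (basic_union U bs))"
    proof (rule field_le_epsilon)
      fix e :: real assume e: "0 < e"
      obtain bs where bs: "measure P ((A - basic_union U bs) \<union> (basic_union U bs - A)) < e / 2"
          "measure Q ((A - basic_union U bs) \<union> (basic_union U bs - A)) < e / 2"
        using basic_union_approx[OF U P.finite_measure_axioms P(2) Q.finite_measure_axioms Q(2), of A "e / 2"]
          A P(2) e by auto
      have "measure P A \<le> measure P (basic_union U bs) + measure P ((A - basic_union U bs) \<union> (basic_union U bs - A))"
        using A P(2) U_sets by (intro measure_le_measure_symdiff P.finite_measure_axioms) auto
      moreover have "measure Q (basic_union U bs)
          \<le> measure Q A + measure Q ((A - basic_union U bs) \<union> (basic_union U bs - A))"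
        using measure_le_measure_symdiff[OF Q.finite_measure_axioms, of "basic_union U bs" A]
          A P(2) Q(2) U_sets by (simp add: Un_commute)
      moreover have "measure P (basic_union U bs) - measure Q (basic_union U bs)
          \<le> (SUP bs. measure P (basic_union U bs) - measure Q (basic_union U bs))"
        by (rule cSUP_upper[OF UNIV_I bdd])
      ultimately show "measure P A - measure Q A
          \<le> (SUP bs. measure P (basic_union U bs) - measure Q (basic_union U bs)) + e"
        using bs by linarith
    qed
  qed (use sets.empty_sets in blast)
  show "(SUP bs. measure P (basic_union U bs) - measure Q (basic_union U bs)) \<le> tv_dist P Q"
    using U_sets P(2) by (intro cSUP_least measure_diff_le_tv_dist[OF P(1)]) auto
qed

lemma measurable_tv_dist_kernel:
  fixes \<kappa> :: "'z \<Rightarrow> 'a::polish_space measure"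
  assumes \<kappa>: "\<kappa> \<in> measurable M (prob_algebra borel)" and Q: "prob_space Q" "sets Q = sets borel"
  shows "(\<lambda>z. tv_dist (\<kappa> z) Q) \<in> borel_measurable M"
proof -
  obtain U :: "nat \<Rightarrow> 'a set" where U: "topological_basis (range U)"
    by (rule countable_basis_enumeration)
  have \<kappa>_z: "prob_space (\<kappa> z)" "sets (\<kappa> z) = sets borel" if "z \<in> space M" for z
    using measurable_space[OF \<kappa> that] by (simp_all add: space_prob_algebra)
  have [measurable]: "(\<lambda>z. measure (\<kappa> z) (basic_union U bs)) \<in> borel_measurable M" for bs
    by (rule measurable_compose[OF \<kappa> measurable_measure_prob_algebra[OF borel_open[OF open_basic_union[OF U]]]])
  have "(\<lambda>z. SUP bs. measure (\<kappa> z) (basic_union U bs) - measure Q (basic_union U bs)) \<in> borel_measurable M"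
  proof (rule borel_measurable_cSUP)
    fix z assume "z \<in> space M"
    then show "bdd_above (range (\<lambda>bs. measure (\<kappa> z) (basic_union U bs) - measure Q (basic_union U bs)))"
      using bdd_above_measure_diff[OF \<kappa>_z(1), of z Q "range (basic_union U)"] by (simp add: image_image)
  qed auto
  moreover have "tv_dist (\<kappa> z) Q = (SUP bs. measure (\<kappa> z) (basic_union U bs) - measure Q (basic_union U bs))"
    if "z \<in> space M" for z
    using \<kappa>_z[OF that] by (intro tv_dist_eq_SUP_basic_union U Q) auto
  ultimately show ?thesis by (subst measurable_cong) auto
qed

lemma sum_level_sets_floor:
  fixes t :: real and M k :: nat
  assumes k: "0 < k" and t: "\<bar>t\<bar> \<le> M"
  defines "N \<equiv> M * k"
  shows "(\<Sum>i<2 * N + 1. (real i - real N) / k * indicator {s. \<lfloor>k * s\<rfloor> = int i - int N} t)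
    = \<lfloor>k * t\<rfloor> / k"
proof -
  define m where "m = \<lfloor>k * t\<rfloor>"
  have "\<bar>k * t\<bar> \<le> N" using t k by (simp add: N_def abs_mult mult_left_mono mult.commute)
  then have m: "- int N \<le> m" "m \<le> int N"
    unfolding m_def by (simp_all add: abs_le_iff le_floor_iff floor_le_iff)
  define i0 where "i0 = nat (m + int N)"
  have "indicator {s. \<lfloor>k * s\<rfloor> = int i - int N} t = (if i = i0 then 1 else 0 :: real)" for i
    using m by (auto simp: indicator_def i0_def m_def)
  then have "(\<Sum>i<2 * N + 1. (real i - real N) / k * indicator {s. \<lfloor>k * s\<rfloor> = int i - int N} t)
      = (\<Sum>i<2 * N + 1. if i = i0 then (real i0 - real N) / k else 0)"
    by (intro sum.cong) auto
  also have "\<dots> = (real i0 - real N) / k"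
    using m by (simp only: sum.delta finite_lessThan) (simp add: i0_def)
  also have "\<dots> = m / k" using m by (simp add: i0_def)
  finally show ?thesis by (simp add: m_def)
qed

lemma abs_diff_sum_indicator_le:
  fixes c :: "'i \<Rightarrow> real"
  shows "\<bar>(\<Sum>i\<in>I. c i * indicator (A i) x) - (\<Sum>i\<in>I. c i * indicator (B i) x)\<bar>
    \<le> (\<Sum>i\<in>I. \<bar>c i\<bar> * indicator ((A i - B i) \<union> (B i - A i)) x)"
proof -
  have "\<bar>(\<Sum>i\<in>I. c i * indicator (A i) x) - (\<Sum>i\<in>I. c i * indicator (B i) x)\<bar>
      \<le> (\<Sum>i\<in>I. \<bar>c i * (indicator (A i) x - indicator (B i) x)\<bar>)"
    by (simp add: sum_subtractf[symmetric] right_diff_distrib)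
  also have "\<dots> = (\<Sum>i\<in>I. \<bar>c i\<bar> * indicator ((A i - B i) \<union> (B i - A i)) x)"
    by (intro sum.cong) (auto simp: abs_mult indicator_def)
  finally show ?thesis .
qed

text \<open>The index type is countable, which makes suprema over this family measurable.\<close>
definition basic_step :: "(nat \<Rightarrow> 'a set) \<Rightarrow> nat \<times> nat \<times> (int \<times> nat list) list \<Rightarrow> 'a \<Rightarrow> real" where
  "basic_step U \<iota> x = (case \<iota> of (M, k, cs) \<Rightarrow>
     max (- real M) (min (real M)
       (\<Sum>j<length cs. of_int (fst (cs ! j)) / real k * indicator (basic_union U (snd (cs ! j))) x)))"

lemma borel_measurable_basic_step:
  assumes "topological_basis (range U)"
  shows "basic_step U \<iota> \<in> borel_measurable borel"
proof -
  have [measurable]: "basic_union U bs \<in> sets borel" for bs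
    by (rule borel_open[OF open_basic_union[OF assms]])
  show ?thesis unfolding basic_step_def by (cases \<iota>) simp
qed

lemma abs_basic_step_le: "\<bar>basic_step U (M, k, cs) x\<bar> \<le> M"
  by (auto simp: basic_step_def)

lemma abs_diff_basic_step_le:
  fixes g :: "'a \<Rightarrow> real" and M k :: nat and W :: "nat \<Rightarrow> nat list"
  assumes k: "0 < k" and g: "\<And>y. \<bar>g y\<bar> \<le> M"
  defines "N \<equiv> M * k"
  defines "C \<equiv> \<lambda>i. {x. \<lfloor>k * g x\<rfloor> = int i - int N}"
  shows "\<bar>g x - basic_step U (M, k, map (\<lambda>i. (int i - int N, W i)) [0..<2 * N + 1]) x\<bar>
    \<le> 1 / k + real M * (\<Sum>i<2 * N + 1. indicator (sym_diff (C i) (basic_union U (W i))) x)"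
proof -
  define c where "c i = (real i - real N) / k" for i
  define S where "S = (\<Sum>i<2 * N + 1. c i * indicator (basic_union U (W i)) x)"
  have S_eq: "basic_step U (M, k, map (\<lambda>i. (int i - int N, W i)) [0..<2 * N + 1]) x
      = max (- real M) (min (real M) S)"
    by (simp add: basic_step_def S_def c_def del: sum.lessThan_Suc upt_Suc)
  have c: "\<bar>c i\<bar> \<le> M" if "i < 2 * N + 1" for i
  proof -
    have "real i \<le> real (2 * N)" using that by (intro of_nat_mono) simp
    then have "\<bar>real i - real N\<bar> \<le> real N" by simp
    then have "\<bar>real i - real N\<bar> / k \<le> real N / k" by (intro divide_right_mono) auto
    then show ?thesis using k by (simp add: c_def N_def)
  qed
  have T_eq: "(\<Sum>i<2 * N + 1. c i * indicator (C i) x) = \<lfloor>k * g x\<rfloor> / k"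
    using sum_level_sets_floor[OF k g[of x]] by (simp add: c_def C_def N_def indicator_def)
  have T_g: "\<bar>\<lfloor>k * g x\<rfloor> / k - g x\<bar> \<le> 1 / k"
  proof -
    have "\<bar>\<lfloor>k * g x\<rfloor> - k * g x\<bar> \<le> 1" by linarith
    then have "\<bar>\<lfloor>k * g x\<rfloor> - k * g x\<bar> / k \<le> 1 / k" by (intro divide_right_mono) auto
    moreover have "\<lfloor>k * g x\<rfloor> / k - g x = (\<lfloor>k * g x\<rfloor> - k * g x) / k" using k by (simp add: field_simps)
    ultimately show ?thesis by simp
  qed
  have "\<bar>(\<Sum>i<2 * N + 1. c i * indicator (C i) x) - S\<bar>
      \<le> (\<Sum>i<2 * N + 1. \<bar>c i\<bar> * indicator (sym_diff (C i) (basic_union U (W i))) x)"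
    unfolding S_def by (rule abs_diff_sum_indicator_le)
  also have "\<dots> \<le> (\<Sum>i<2 * N + 1. real M * indicator (sym_diff (C i) (basic_union U (W i))) x)"
    by (intro sum_mono mult_right_mono c) auto
  also have "\<dots> = real M * (\<Sum>i<2 * N + 1. indicator (sym_diff (C i) (basic_union U (W i))) x)"
    by (rule sum_distrib_left[symmetric])
  finally have S_T: "\<bar>(\<Sum>i<2 * N + 1. c i * indicator (C i) x) - S\<bar>
      \<le> real M * (\<Sum>i<2 * N + 1. indicator (sym_diff (C i) (basic_union U (W i))) x)" .
  moreover have "\<bar>max (- real M) (min (real M) S) - g x\<bar> \<le> \<bar>S - g x\<bar>"
    using g[of x] by (auto simp: abs_le_iff)
  ultimately show ?thesis using T_eq T_g unfolding S_eq by linarith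
qed

lemma exp_diff_le_abs:
  fixes s t B :: real
  assumes "t \<le> B"
  shows "exp t - exp s \<le> exp B * \<bar>s - t\<bar>"
proof (cases "s \<le> t")
  case True
  have "exp t * (1 + (s - t)) \<le> exp t * exp (s - t)" by (intro mult_left_mono exp_ge_add_one_self) auto
  then have "exp t - exp s \<le> exp t * (t - s)" by (simp add: exp_diff algebra_simps)
  also have "\<dots> \<le> exp B * (t - s)" using True assms by (intro mult_right_mono) auto
  finally show ?thesis using True by simp
next
  case False
  then have "exp t \<le> exp s" by simp
  moreover have "0 \<le> exp B * \<bar>s - t\<bar>" by simp
  ultimately show ?thesis by linarith
qed

lemma ln_integral_exp_diff_le:
  fixes g h :: "'a \<Rightarrow> real"
  assumes Q: "prob_space Q" and g[measurable]: "g \<in> borel_measurable Q" and h[measurable]: "h \<in> borel_measurable Q"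
    and gb: "\<And>x. \<bar>g x\<bar> \<le> B" and hb: "\<And>x. \<bar>h x\<bar> \<le> B"
  shows "ln (\<integral>x. exp (h x) \<partial>Q) - ln (\<integral>x. exp (g x) \<partial>Q) \<le> exp (2 * B) * (\<integral>x. \<bar>g x - h x\<bar> \<partial>Q)"
proof -
  interpret Q: prob_space Q by fact
  define X where "X = (\<integral>x. exp (g x) \<partial>Q)"
  define Y where "Y = (\<integral>x. exp (h x) \<partial>Q)"
  define I where "I = (\<integral>x. \<bar>g x - h x\<bar> \<partial>Q)"
  have bnd: "- B \<le> g x" "g x \<le> B" "- B \<le> h x" "h x \<le> B" for x
    using gb[of x] hb[of x] by (simp_all add: abs_le_iff)
  have int: "integrable Q (\<lambda>x. exp (g x))" "integrable Q (\<lambda>x. exp (h x))"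
    using bnd by (auto intro!: integrable_bounded[where B="exp B"])
  have int_abs: "integrable Q (\<lambda>x. \<bar>g x - h x\<bar>)"
  proof (rule integrable_bounded[where B="2 * B"])
    fix x show "\<bar>\<bar>g x - h x\<bar>\<bar> \<le> 2 * B" using gb[of x] hb[of x] by arith
  qed auto
  have XY: "exp (- B) \<le> X" "exp (- B) \<le> Y"
    using integral_mono[OF _ int(1), of "\<lambda>_. exp (- B)"] integral_mono[OF _ int(2), of "\<lambda>_. exp (- B)"] bnd
    by (simp_all add: X_def Y_def Q.prob_space)
  then have X0: "0 < X" and Y0: "0 < Y" by (auto intro: less_le_trans[OF exp_gt_zero])
  have "1 / X \<le> 1 / exp (- B)" using XY X0 by (intro divide_left_mono) auto
  moreover have "1 / exp (- B) = exp B" by (simp add: exp_minus inverse_eq_divide)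
  ultimately have X_inv: "1 / X \<le> exp B" by linarith
  have "(\<integral>x. exp (h x) - exp (g x) \<partial>Q) \<le> (\<integral>x. exp B * \<bar>g x - h x\<bar> \<partial>Q)"
    using int int_abs bnd by (intro integral_mono exp_diff_le_abs) auto
  then have YX: "Y - X \<le> exp B * I" using int by (simp add: X_def Y_def I_def)
  have I0: "0 \<le> I" by (simp add: I_def)
  have "ln Y - ln X \<le> Y / X - 1" using X0 Y0 ln_le_minus_one[of "Y / X"] by (simp add: ln_div)
  also have "\<dots> = (Y - X) * (1 / X)" using X0 by (simp add: field_simps)
  also have "\<dots> \<le> exp B * I * exp B"
    using YX X_inv X0 I0 by (intro mult_mono) auto
  also have "\<dots> = exp (2 * B) * I" by (metis exp_add mult_2 mult.commute mult.left_commute)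
  finally show ?thesis by (simp add: X_def Y_def I_def)
qed

lemma donsker_varadhan_diff_le:
  fixes g h :: "'a \<Rightarrow> real"
  assumes P: "prob_space P" and Q: "prob_space Q" and sets_eq: "sets P = sets Q"
    and g[measurable]: "g \<in> borel_measurable Q" and h[measurable]: "h \<in> borel_measurable Q"
    and gb: "\<And>x. \<bar>g x\<bar> \<le> B" and hb: "\<And>x. \<bar>h x\<bar> \<le> B"
  shows "donsker_varadhan P Q g - donsker_varadhan P Q h
    \<le> (\<integral>x. \<bar>g x - h x\<bar> \<partial>P) + exp (2 * B) * (\<integral>x. \<bar>g x - h x\<bar> \<partial>Q)"
proof -
  interpret P: prob_space P by fact
  have [measurable]: "g \<in> borel_measurable P" "h \<in> borel_measurable P"
    using sets_eq by (simp_all cong: measurable_cong_sets)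
  have int: "integrable P g" "integrable P h"
    using gb hb by (auto intro!: integrable_bounded[where B=B])
  then have "(\<integral>x. g x \<partial>P) - (\<integral>x. h x \<partial>P) = (\<integral>x. g x - h x \<partial>P)" by simp
  also have "\<dots> \<le> (\<integral>x. \<bar>g x - h x\<bar> \<partial>P)" using int by (intro integral_mono) auto
  finally have "(\<integral>x. g x \<partial>P) - (\<integral>x. h x \<partial>P) \<le> (\<integral>x. \<bar>g x - h x\<bar> \<partial>P)" .
  then show ?thesis
    using ln_integral_exp_diff_le[OF Q g h gb hb] by (simp add: donsker_varadhan_def)
qed

lemma integral_abs_diff_basic_step_le:
  fixes R :: "'a::topological_space measure" and g :: "'a \<Rightarrow> real" and M k :: nat and W :: "nat \<Rightarrow> nat list"
  assumes U: "topological_basis (range U)" and R: "prob_space R" "sets R = sets borel"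
    and g[measurable]: "g \<in> borel_measurable borel" and gb: "\<And>x. \<bar>g x\<bar> \<le> M" and k: "0 < k"
  defines "N \<equiv> M * k"
  defines "C \<equiv> \<lambda>i. {x. \<lfloor>k * g x\<rfloor> = int i - int N}"
  shows "(\<integral>x. \<bar>g x - basic_step U (M, k, map (\<lambda>i. (int i - int N, W i)) [0..<2 * N + 1]) x\<bar> \<partial>R)
    \<le> 1 / k + real M * (\<Sum>i<2 * N + 1. measure R (sym_diff (C i) (basic_union U (W i))))"
proof -
  interpret R: prob_space R by fact
  define G where "G = basic_step U (M, k, map (\<lambda>i. (int i - int N, W i)) [0..<2 * N + 1])"
  have [measurable]: "sym_diff (C i) (basic_union U (W i)) \<in> sets R" for i
    using borel_open[OF open_basic_union[OF U]] R(2) unfolding C_def by auto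
  have [measurable]: "G \<in> borel_measurable R"
    using borel_measurable_basic_step[OF U] R(2) by (simp add: G_def cong: measurable_cong_sets)
  have "integrable R (\<lambda>x. \<bar>g x - G x\<bar>)"
  proof (rule integrable_bounded[OF R.finite_measure_axioms, where B="2 * M"])
    fix x
    have "\<bar>G x\<bar> \<le> M" unfolding G_def by (rule abs_basic_step_le)
    then show "\<bar>\<bar>g x - G x\<bar>\<bar> \<le> 2 * M" using gb[of x] by arith
  qed (use R(2) in \<open>simp cong: measurable_cong_sets\<close>)
  moreover have "integrable R
      (\<lambda>x. 1 / k + real M * (\<Sum>i<2 * N + 1. indicator (sym_diff (C i) (basic_union U (W i))) x))"
    by (simp add: R.emeasure_eq_measure)
  moreover have "\<bar>g x - G x\<bar> \<le> 1 / k + real M * (\<Sum>i<2 * N + 1. indicator (sym_diff (C i) (basic_union U (W i))) x)"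
    for x unfolding G_def N_def C_def by (rule abs_diff_basic_step_le[OF k gb])
  ultimately have "(\<integral>x. \<bar>g x - G x\<bar> \<partial>R)
      \<le> (\<integral>x. 1 / k + real M * (\<Sum>i<2 * N + 1. indicator (sym_diff (C i) (basic_union U (W i))) x) \<partial>R)"
    by (intro integral_mono)
  also have "\<dots> = 1 / k + real M * (\<Sum>i<2 * N + 1. measure R (sym_diff (C i) (basic_union U (W i))))"
    by (simp add: R.emeasure_eq_measure R.prob_space integral_sum)
  finally show ?thesis by (simp add: G_def)
qed

lemma basic_step_L1_approx:
  fixes P Q :: "'a::polish_space measure" and g :: "'a \<Rightarrow> real" and M :: nat
  assumes U: "topological_basis (range U)"
    and P: "prob_space P" "sets P = sets borel" and Q: "prob_space Q" "sets Q = sets borel"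
    and g[measurable]: "g \<in> borel_measurable borel" and gb: "\<And>x. \<bar>g x\<bar> \<le> M" and \<delta>: "0 < \<delta>"
  obtains k cs where "(\<integral>x. \<bar>g x - basic_step U (M, k, cs) x\<bar> \<partial>P) < \<delta>"
    "(\<integral>x. \<bar>g x - basic_step U (M, k, cs) x\<bar> \<partial>Q) < \<delta>"
proof -
  obtain k :: nat where k: "2 / \<delta> < k" using reals_Archimedean2 by blast
  then have k0: "0 < k" using \<delta> by (metis divide_pos_pos of_nat_0_less_iff order.strict_trans zero_less_numeral)
  have k\<delta>: "1 / k < \<delta> / 2" using k \<delta> k0 by (simp add: field_simps)
  define N where "N = M * k"
  define L where "L = 2 * N + 1"
  define C where "C i = {x. \<lfloor>k * g x\<rfloor> = int i - int N}" for i :: nat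
  define \<eta> where "\<eta> = \<delta> / (2 * (real M + 1) * real L)"
  have C_borel: "C i \<in> sets borel" for i unfolding C_def by measurable
  have L0: "0 < real L" by (simp add: L_def)
  then have "0 < 2 * (real M + 1) * real L" by simp
  then have \<eta>0: "0 < \<eta>" unfolding \<eta>_def using \<delta> by (intro divide_pos_pos)
  have "\<forall>i. \<exists>bs. measure P (sym_diff (C i) (basic_union U bs)) < \<eta> \<and> measure Q (sym_diff (C i) (basic_union U bs)) < \<eta>"
    using basic_union_approx[OF U prob_space.finite_measure[OF P(1)] P(2) prob_space.finite_measure[OF Q(1)] Q(2) C_borel \<eta>0]
    by metis
  then obtain W where W: "\<And>i. measure P (sym_diff (C i) (basic_union U (W i))) < \<eta>"
    "\<And>i. measure Q (sym_diff (C i) (basic_union U (W i))) < \<eta>"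
    by metis
  have L\<eta>: "real M * (L * \<eta>) \<le> \<delta> / 2"
  proof -
    have "L * \<eta> = \<delta> / (2 * (real M + 1))"
      using L0 unfolding \<eta>_def divide_divide_eq_left[symmetric] by simp
    then have "real M * (L * \<eta>) = \<delta> / 2 * (M / (M + 1))" by (simp add: algebra_simps)
    also have "\<dots> \<le> \<delta> / 2" using \<delta> by (intro mult_left_le) auto
    finally show ?thesis .
  qed
  have "(\<integral>x. \<bar>g x - basic_step U (M, k, map (\<lambda>i. (int i - int N, W i)) [0..<L]) x\<bar> \<partial>R) < \<delta>"
    if R: "prob_space R" "sets R = sets borel" and RW: "\<And>i. measure R (sym_diff (C i) (basic_union U (W i))) < \<eta>" for R
  proof -
    have "(\<Sum>i<L. measure R (sym_diff (C i) (basic_union U (W i)))) \<le> L * \<eta>"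
      using sum_mono[of "{..<L}", OF less_imp_le[OF RW]] by simp
    then have "real M * (\<Sum>i<L. measure R (sym_diff (C i) (basic_union U (W i)))) \<le> \<delta> / 2"
      using L\<eta> by (meson mult_left_mono of_nat_0_le_iff order.trans)
    then show ?thesis
      using integral_abs_diff_basic_step_le[OF U R g gb k0, of W] k\<delta> by (simp add: L_def N_def C_def)
  qed
  then show ?thesis using P Q W by (intro that) auto
qed

lemma donsker_varadhan_le_SUP_basic_step:
  fixes P Q :: "'a::polish_space measure"
  assumes U: "topological_basis (range U)"
    and P: "prob_space P" "sets P = sets borel" and Q: "prob_space Q" "sets Q = sets borel"
    and g[measurable]: "g \<in> borel_measurable borel" and gb: "\<And>x. \<bar>g x\<bar> \<le> B"
  shows "ereal (donsker_varadhan P Q g) \<le> (SUP \<iota>. ereal (donsker_varadhan P Q (basic_step U \<iota>)))"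
proof (rule ereal_le_epsilon2)
  fix \<epsilon> :: real assume \<epsilon>: "0 < \<epsilon>"
  define M where "M = nat \<lceil>B\<rceil>"
  have gM: "\<bar>g x\<bar> \<le> M" for x using gb[of x] by (simp add: M_def) linarith
  define \<delta> where "\<delta> = \<epsilon> / (1 + exp (2 * real M))"
  have \<delta>: "0 < \<delta>" using \<epsilon> by (simp add: \<delta>_def add_pos_pos)
  obtain k cs where kcs: "(\<integral>x. \<bar>g x - basic_step U (M, k, cs) x\<bar> \<partial>P) < \<delta>"
    "(\<integral>x. \<bar>g x - basic_step U (M, k, cs) x\<bar> \<partial>Q) < \<delta>"
    using basic_step_L1_approx[OF U P Q g gM \<delta>] by blast
  have [measurable]: "g \<in> borel_measurable Q" "basic_step U (M, k, cs) \<in> borel_measurable Q"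
    using borel_measurable_basic_step[OF U] Q(2) by (simp_all cong: measurable_cong_sets)
  have "donsker_varadhan P Q g - donsker_varadhan P Q (basic_step U (M, k, cs))
      \<le> (\<integral>x. \<bar>g x - basic_step U (M, k, cs) x\<bar> \<partial>P)
        + exp (2 * real M) * (\<integral>x. \<bar>g x - basic_step U (M, k, cs) x\<bar> \<partial>Q)"
    using P Q by (intro donsker_varadhan_diff_le gM abs_basic_step_le) auto
  also have "\<dots> \<le> \<delta> + exp (2 * real M) * \<delta>"
    using kcs by (intro add_mono mult_left_mono) auto
  also have "\<dots> = \<delta> * (1 + exp (2 * real M))" by (simp add: algebra_simps)
  also have "\<dots> = \<epsilon>" using add_pos_pos[OF zero_less_one exp_gt_zero, of "2 * real M"] by (simp add: \<delta>_def)
  finally have "ereal (donsker_varadhan P Q g) \<le> ereal (donsker_varadhan P Q (basic_step U (M, k, cs))) + \<epsilon>"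
    by simp
  also have "\<dots> \<le> (SUP \<iota>. ereal (donsker_varadhan P Q (basic_step U \<iota>))) + \<epsilon>"
    by (intro add_right_mono SUP_upper) auto
  finally show "ereal (donsker_varadhan P Q g) \<le> (SUP \<iota>. ereal (donsker_varadhan P Q (basic_step U \<iota>))) + \<epsilon>" .
qed

lemma rel_entropy_eq_SUP_basic_step:
  fixes P Q :: "'a::polish_space measure"
  assumes U: "topological_basis (range U)"
    and P: "prob_space P" "sets P = sets borel" and Q: "prob_space Q" "sets Q = sets borel"
  shows "rel_entropy P Q = (SUP \<iota>. ereal (donsker_varadhan P Q (basic_step U \<iota>)))"
proof (rule antisym)
  have sets_eq: "sets P = sets Q" using P Q by simp
  show "rel_entropy P Q \<le> (SUP \<iota>. ereal (donsker_varadhan P Q (basic_step U \<iota>)))"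
    unfolding rel_entropy_variational[OF P(1) Q(1) sets_eq]
    using Q(2) by (intro SUP_least) (auto intro!: donsker_varadhan_le_SUP_basic_step[OF U P Q]
        cong: measurable_cong_sets)
  show "(SUP \<iota>. ereal (donsker_varadhan P Q (basic_step U \<iota>))) \<le> rel_entropy P Q"
  proof (rule SUP_least)
    fix \<iota> :: "nat \<times> nat \<times> (int \<times> nat list) list"
    obtain M k cs where \<iota>: "\<iota> = (M, k, cs)" by (cases \<iota>)
    show "ereal (donsker_varadhan P Q (basic_step U \<iota>)) \<le> rel_entropy P Q"
      using borel_measurable_basic_step[OF U] Q(2) abs_basic_step_le \<iota>
      by (intro donsker_varadhan_le_rel_entropy[OF P(1) Q(1) sets_eq]) (auto cong: measurable_cong_sets)
  qed
qed

lemma measurable_rel_entropy_kernel: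
  fixes \<kappa> :: "'z \<Rightarrow> 'a::polish_space measure"
  assumes \<kappa>: "\<kappa> \<in> measurable M (prob_algebra borel)" and Q: "prob_space Q" "sets Q = sets borel"
  shows "(\<lambda>z. rel_entropy (\<kappa> z) Q) \<in> borel_measurable M"
proof -
  obtain U :: "nat \<Rightarrow> 'a set" where U: "topological_basis (range U)"
    by (rule countable_basis_enumeration)
  have [measurable]: "(\<lambda>z. \<integral>x. basic_step U \<iota> x \<partial>\<kappa> z) \<in> borel_measurable M" for \<iota>
    by (rule measurable_compose[OF measurable_prob_algebraD[OF \<kappa>]
          integral_measurable_subprob_algebra[OF borel_measurable_basic_step[OF U]]])
  have "(\<lambda>z. SUP \<iota>. ereal (donsker_varadhan (\<kappa> z) Q (basic_step U \<iota>))) \<in> borel_measurable M"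
    unfolding donsker_varadhan_def by measurable
  moreover have "rel_entropy (\<kappa> z) Q = (SUP \<iota>. ereal (donsker_varadhan (\<kappa> z) Q (basic_step U \<iota>)))"
    if "z \<in> space M" for z
    using measurable_space[OF \<kappa> that] by (intro rel_entropy_eq_SUP_basic_step U Q) (auto simp: space_prob_algebra)
  ultimately show ?thesis by (subst measurable_cong) auto
qed

section \<open>Kernels and the generalization gap\<close>

lemma kernel_space:
  assumes "K \<in> M \<rightarrow>\<^sub>M prob_algebra W" "x \<in> space M"
  shows "prob_space (K x)" "sets (K x) = sets W" "space (K x) = space W"
  using measurable_space[OF assms] sets_eq_imp_space_eq by (auto simp: space_prob_algebra)

lemma emeasure_bind_distr_pair_rectangle:
  assumes M: "prob_space M" and K: "K \<in> M \<rightarrow>\<^sub>M prob_algebra W" and X[measurable]: "X \<in> M \<rightarrow>\<^sub>M Z"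
    and A: "A \<in> sets Z" and B: "B \<in> sets W"
  shows "emeasure (M \<bind> (\<lambda>s. distr (K s) (W \<Otimes>\<^sub>M Z) (\<lambda>w. (w, X s)))) (B \<times> A)
    = ennreal (\<integral>s. indicator A (X s) * measure (K s) B \<partial>M)"
proof -
  interpret M: prob_space M by fact
  have kernel: "(\<lambda>s. distr (K s) (W \<Otimes>\<^sub>M Z) (\<lambda>w. (w, X s))) \<in> M \<rightarrow>\<^sub>M prob_algebra (W \<Otimes>\<^sub>M Z)"
    by (rule measurable_distr_prob_space2[OF K]) measurable
  have "emeasure (M \<bind> (\<lambda>s. distr (K s) (W \<Otimes>\<^sub>M Z) (\<lambda>w. (w, X s)))) (B \<times> A)
      = (\<integral>\<^sup>+s. emeasure (distr (K s) (W \<Otimes>\<^sub>M Z) (\<lambda>w. (w, X s))) (B \<times> A) \<partial>M)"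
    using A B by (intro emeasure_bind_prob_algebra[OF _ kernel]) (auto simp: space_prob_algebra M.prob_space_axioms)
  also have "\<dots> = (\<integral>\<^sup>+s. ennreal (indicator A (X s) * measure (K s) B) \<partial>M)"
  proof (rule nn_integral_cong)
    fix s assume s: "s \<in> space M"
    interpret Ks: prob_space "K s" using kernel_space(1)[OF K s] .
    have "(\<lambda>w. (w, X s)) \<in> K s \<rightarrow>\<^sub>M W \<Otimes>\<^sub>M Z"
      using measurable_Pair2'[OF measurable_space[OF X s], of W] kernel_space(2)[OF K s]
      by (simp cong: measurable_cong_sets)
    then have "emeasure (distr (K s) (W \<Otimes>\<^sub>M Z) (\<lambda>w. (w, X s))) (B \<times> A)
        = emeasure (K s) ((\<lambda>w. (w, X s)) -` (B \<times> A) \<inter> space (K s))"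
      using A B by (intro emeasure_distr) auto
    also have "(\<lambda>w. (w, X s)) -` (B \<times> A) \<inter> space (K s) = (if X s \<in> A then B else {})"
      using sets.sets_into_space[OF B] kernel_space(3)[OF K s] by auto
    finally show "emeasure (distr (K s) (W \<Otimes>\<^sub>M Z) (\<lambda>w. (w, X s))) (B \<times> A)
        = ennreal (indicator A (X s) * measure (K s) B)"
      by (simp add: Ks.emeasure_eq_measure indicator_def)
  qed
  also have "\<dots> = ennreal (\<integral>s. indicator A (X s) * measure (K s) B \<partial>M)"
  proof (rule nn_integral_eq_integral)
    have [measurable]: "(\<lambda>s. measure (K s) B) \<in> borel_measurable M"
      by (rule measurable_compose[OF K measurable_measure_prob_algebra[OF B]])
    show "integrable M (\<lambda>s. indicator A (X s) * measure (K s) B)"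
      using A prob_space.prob_le_1[OF kernel_space(1)[OF K]]
      by (intro integrable_bounded[OF M.finite_measure_axioms, where B=1]) (auto simp: indicator_def)
  qed (simp add: indicator_def)
  finally show ?thesis .
qed

lemma integral_bind_distr_pair:
  fixes F :: "'w \<Rightarrow> 'z \<Rightarrow> real"
  assumes M: "prob_space M" and K: "K \<in> M \<rightarrow>\<^sub>M prob_algebra W" and X[measurable]: "X \<in> M \<rightarrow>\<^sub>M Z"
    and F[measurable]: "(\<lambda>(w, z). F w z) \<in> borel_measurable (W \<Otimes>\<^sub>M Z)"
    and Fb: "\<And>w z. w \<in> space W \<Longrightarrow> z \<in> space Z \<Longrightarrow> \<bar>F w z\<bar> \<le> C"
  shows "(\<integral>p. (case p of (w, z) \<Rightarrow> F w z) \<partial>(M \<bind> (\<lambda>s. distr (K s) (W \<Otimes>\<^sub>M Z) (\<lambda>w. (w, X s)))))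
      = (\<integral>s. (\<integral>w. F w (X s) \<partial>K s) \<partial>M)"
    and "(\<lambda>s. \<integral>w. F w (X s) \<partial>K s) \<in> borel_measurable M"
proof -
  interpret M: prob_space M by fact
  define k where "k s = distr (K s) (W \<Otimes>\<^sub>M Z) (\<lambda>w. (w, X s))" for s
  have kernel: "k \<in> M \<rightarrow>\<^sub>M prob_algebra (W \<Otimes>\<^sub>M Z)"
    unfolding k_def by (rule measurable_distr_prob_space2[OF K]) measurable
  have k_eq: "(\<integral>p. (case p of (w, z) \<Rightarrow> F w z) \<partial>k s) = (\<integral>w. F w (X s) \<partial>K s)" if s: "s \<in> space M" for s
  proof -
    have "(\<lambda>w. (w, X s)) \<in> K s \<rightarrow>\<^sub>M W \<Otimes>\<^sub>M Z"
      using measurable_Pair2'[OF measurable_space[OF X s], of W] kernel_space(2)[OF K s]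
      by (simp cong: measurable_cong_sets)
    then show ?thesis unfolding k_def by (subst integral_distr[OF _ F]) simp_all
  qed
  have "(\<lambda>s. \<integral>p. (case p of (w, z) \<Rightarrow> F w z) \<partial>k s) \<in> borel_measurable M"
    by (rule measurable_compose[OF measurable_prob_algebraD[OF kernel] integral_measurable_subprob_algebra[OF F]])
  then show "(\<lambda>s. \<integral>w. F w (X s) \<partial>K s) \<in> borel_measurable M"
    by (rule measurable_cong[THEN iffD1, rotated]) (rule k_eq)
  have F_bnd: "\<bar>case p of (w, z) \<Rightarrow> F w z\<bar> \<le> C" if "p \<in> space (W \<Otimes>\<^sub>M Z)" for p
    using that Fb by (auto simp: space_pair_measure)
  have "(\<integral>p. (case p of (w, z) \<Rightarrow> F w z) \<partial>(M \<bind> k)) = (\<integral>s. (\<integral>p. (case p of (w, z) \<Rightarrow> F w z) \<partial>k s) \<partial>M)"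
    by (rule integral_bind[OF F F_bnd measurable_prob_algebraD[OF kernel] M.finite_measure_axioms, where B'=1])
       (auto dest!: measurable_space[OF kernel] simp: space_prob_algebra prob_space.emeasure_space_1)
  also have "\<dots> = (\<integral>s. (\<integral>w. F w (X s) \<partial>K s) \<partial>M)"
    by (rule Bochner_Integration.integral_cong) (auto simp: k_eq)
  finally show "(\<integral>p. (case p of (w, z) \<Rightarrow> F w z) \<partial>(M \<bind> (\<lambda>s. distr (K s) (W \<Otimes>\<^sub>M Z) (\<lambda>w. (w, X s)))))
      = (\<integral>s. (\<integral>w. F w (X s) \<partial>K s) \<partial>M)" unfolding k_def .
qed

lemma integral_kernel_eq_of_rectangles:
  fixes F :: "'w \<Rightarrow> 'z \<Rightarrow> real"
  assumes S: "prob_space S" and PZ: "prob_space PZ"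
    and K: "K \<in> S \<rightarrow>\<^sub>M prob_algebra W" and \<kappa>: "\<kappa> \<in> PZ \<rightarrow>\<^sub>M prob_algebra W"
    and X[measurable]: "X \<in> S \<rightarrow>\<^sub>M PZ"
    and rect: "\<And>A B. A \<in> sets PZ \<Longrightarrow> B \<in> sets W \<Longrightarrow>
      (\<integral>s. indicator A (X s) * measure (K s) B \<partial>S) = (\<integral>z. indicator A z * measure (\<kappa> z) B \<partial>PZ)"
    and F[measurable]: "(\<lambda>(w, z). F w z) \<in> borel_measurable (W \<Otimes>\<^sub>M PZ)"
    and Fb: "\<And>w z. w \<in> space W \<Longrightarrow> z \<in> space PZ \<Longrightarrow> \<bar>F w z\<bar> \<le> C"
  shows "(\<integral>s. (\<integral>w. F w (X s) \<partial>K s) \<partial>S) = (\<integral>z. (\<integral>w. F w z \<partial>\<kappa> z) \<partial>PZ)"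
proof -
  interpret S: prob_space S by fact
  interpret PZ: prob_space PZ by fact
  define \<nu>1 where "\<nu>1 = S \<bind> (\<lambda>s. distr (K s) (W \<Otimes>\<^sub>M PZ) (\<lambda>w. (w, X s)))"
  define \<nu>2 where "\<nu>2 = PZ \<bind> (\<lambda>z. distr (\<kappa> z) (W \<Otimes>\<^sub>M PZ) (\<lambda>w. (w, z)))"
  have id: "(\<lambda>z. z) \<in> PZ \<rightarrow>\<^sub>M PZ" by simp
  have k1: "(\<lambda>s. distr (K s) (W \<Otimes>\<^sub>M PZ) (\<lambda>w. (w, X s))) \<in> S \<rightarrow>\<^sub>M prob_algebra (W \<Otimes>\<^sub>M PZ)"
    by (rule measurable_distr_prob_space2[OF K]) measurable
  have k2: "(\<lambda>z. distr (\<kappa> z) (W \<Otimes>\<^sub>M PZ) (\<lambda>w. (w, z))) \<in> PZ \<rightarrow>\<^sub>M prob_algebra (W \<Otimes>\<^sub>M PZ)"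
    by (rule measurable_distr_prob_space2[OF \<kappa>]) measurable
  have S_in: "S \<in> space (prob_algebra S)" and PZ_in: "PZ \<in> space (prob_algebra PZ)"
    by (simp_all add: space_prob_algebra S.prob_space_axioms PZ.prob_space_axioms)
  have sets_\<nu>: "sets \<nu>1 = sets (W \<Otimes>\<^sub>M PZ)" "sets \<nu>2 = sets (W \<Otimes>\<^sub>M PZ)"
    unfolding \<nu>1_def \<nu>2_def by (rule sets_bind'[OF S_in k1], rule sets_bind'[OF PZ_in k2])
  have "\<nu>1 = \<nu>2"
  proof (rule measure_eqI_generator_eq[OF Int_stable_pair_measure_generator pair_measure_closed,
        where A="\<lambda>_. space W \<times> space PZ"])
    show "sets \<nu>1 = sigma_sets (space W \<times> space PZ) {a \<times> b |a b. a \<in> sets W \<and> b \<in> sets PZ}"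
      "sets \<nu>2 = sigma_sets (space W \<times> space PZ) {a \<times> b |a b. a \<in> sets W \<and> b \<in> sets PZ}"
      using sets_\<nu> by (simp_all add: sets_pair_measure)
    show "emeasure \<nu>1 R = emeasure \<nu>2 R" if "R \<in> {a \<times> b |a b. a \<in> sets W \<and> b \<in> sets PZ}" for R
    proof -
      from that obtain B A where R: "R = B \<times> A" "B \<in> sets W" "A \<in> sets PZ" by auto
      show ?thesis
        using rect[OF R(3,2)] emeasure_bind_distr_pair_rectangle[OF S K X R(3,2)]
          emeasure_bind_distr_pair_rectangle[OF PZ \<kappa> id R(3,2)]
        by (simp add: \<nu>1_def \<nu>2_def R(1))
    qed
    have "prob_space \<nu>1" unfolding \<nu>1_def by (rule prob_space_bind'[OF S_in k1])
    then show "emeasure \<nu>1 (space W \<times> space PZ) \<noteq> \<infinity>" for i :: nat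
      by (simp add: finite_measure.emeasure_eq_measure[OF prob_space.finite_measure])
  qed auto
  then show ?thesis
    using integral_bind_distr_pair(1)[OF S K X F Fb] integral_bind_distr_pair(1)[OF PZ \<kappa> id F Fb]
    by (simp add: \<nu>1_def \<nu>2_def)
qed

lemma integrable_integral_kernel:
  fixes F :: "'w \<Rightarrow> 'z \<Rightarrow> real"
  assumes M: "prob_space M" and K: "K \<in> M \<rightarrow>\<^sub>M prob_algebra W"
    and F[measurable]: "(\<lambda>(w, z). F w z) \<in> borel_measurable (W \<Otimes>\<^sub>M M)"
    and Fb: "\<And>w z. w \<in> space W \<Longrightarrow> z \<in> space M \<Longrightarrow> \<bar>F w z\<bar> \<le> C"
  shows "integrable M (\<lambda>z. \<integral>w. F w z \<partial>K z)"
proof -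
  have "(\<lambda>z. \<integral>w. F w z \<partial>K z) \<in> borel_measurable M"
    using integral_bind_distr_pair(2)[OF M K _ F Fb, of "\<lambda>z. z"] by simp
  then show ?thesis
    using Fb kernel_space[OF K] measurable_Pair2'[THEN measurable_compose, OF _ F]
    by (intro integrable_bounded[OF prob_space.finite_measure[OF M], where B=C] abs_integral_le_bound)
      (auto cong: measurable_cong_sets)
qed

lemma borel_measurable_pop_risk:
  assumes "prob_space PZ" "(\<lambda>(w, z). loss w z) \<in> borel_measurable (W \<Otimes>\<^sub>M PZ)"
  shows "pop_risk loss PZ \<in> borel_measurable W"
proof -
  interpret prob_space PZ by fact
  show ?thesis unfolding pop_risk_def by (rule borel_measurable_lebesgue_integral) (use assms(2) in simp)
qed

lemma abs_pop_risk_le: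
  assumes PZ: "prob_space PZ" and loss: "(\<lambda>(w, z). loss w z) \<in> borel_measurable (W \<Otimes>\<^sub>M PZ)"
    and loss_bnd: "\<And>w z. z \<in> space PZ \<Longrightarrow> \<bar>loss w z\<bar> \<le> C" and w: "w \<in> space W"
  shows "\<bar>pop_risk loss PZ w\<bar> \<le> C"
proof -
  have "(\<lambda>z. loss w z) \<in> borel_measurable PZ"
    using measurable_Pair1'[THEN measurable_compose, OF w loss] by simp
  then show ?thesis unfolding pop_risk_def using loss_bnd by (intro abs_integral_le_bound[OF PZ]) auto
qed

lemma integral_pop_risk_diff_emp_risk:
  fixes loss :: "'w \<Rightarrow> 'z \<Rightarrow> real"
  assumes PZ: "prob_space PZ" and \<mu>: "prob_space \<mu>" "sets \<mu> = sets W"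
    and loss[measurable]: "(\<lambda>(w, z). loss w z) \<in> borel_measurable (W \<Otimes>\<^sub>M PZ)"
    and loss_bnd: "\<And>w z. z \<in> space PZ \<Longrightarrow> \<bar>loss w z\<bar> \<le> C"
    and s: "\<And>i. i < n \<Longrightarrow> s i \<in> space PZ"
  shows "(\<integral>w. pop_risk loss PZ w - emp_risk loss n s w \<partial>\<mu>)
    = (\<integral>w. pop_risk loss PZ w \<partial>\<mu>) - (\<Sum>i<n. \<integral>w. loss w (s i) \<partial>\<mu>) / n"
proof -
  interpret \<mu>: prob_space \<mu> by fact
  have [measurable]: "(\<lambda>w. loss w (s i)) \<in> borel_measurable \<mu>" if "i < n" for i
    using measurable_Pair2'[THEN measurable_compose, OF s[OF that] loss] \<mu>(2)
    by (simp cong: measurable_cong_sets)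
  have int_pop: "integrable \<mu> (pop_risk loss PZ)"
    using abs_pop_risk_le[OF PZ loss loss_bnd] borel_measurable_pop_risk[OF PZ loss] \<mu>(2)
      sets_eq_imp_space_eq[OF \<mu>(2)]
    by (intro integrable_bounded[OF \<mu>.finite_measure_axioms, where B=C]) (auto cong: measurable_cong_sets)
  have int_loss: "integrable \<mu> (\<lambda>w. loss w (s i))" if "i < n" for i
    using loss_bnd[OF s[OF that]] that by (intro integrable_bounded[OF \<mu>.finite_measure_axioms, where B=C]) auto
  then have "integrable \<mu> (\<lambda>w. (\<Sum>i<n. loss w (s i)) / n)"
    by (intro integrable_divide_zero integrable_sum) auto
  then show ?thesis using int_pop int_loss by (simp add: emp_risk_def integral_sum)
qed

lemma exp_gen_eq_bind:
  fixes PZ :: "'z measure" and K :: "(nat \<Rightarrow> 'z) \<Rightarrow> 'w measure" and loss :: "'w \<Rightarrow> 'z \<Rightarrow> real"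
  assumes PZ: "prob_space PZ" and K: "K \<in> PiM {..<n} (\<lambda>_. PZ) \<rightarrow>\<^sub>M prob_algebra W"
    and loss[measurable]: "(\<lambda>(w, z). loss w z) \<in> borel_measurable (W \<Otimes>\<^sub>M PZ)"
    and loss_bnd: "\<And>w z. z \<in> space PZ \<Longrightarrow> \<bar>loss w z\<bar> \<le> C"
  defines "S \<equiv> PiM {..<n} (\<lambda>_. PZ)"
  shows "exp_gen loss PZ n K
    = (\<integral>w. pop_risk loss PZ w \<partial>(S \<bind> K)) - (\<Sum>i<n. \<integral>s. (\<integral>w. loss w (s i) \<partial>K s) \<partial>S) / n"
proof -
  have S: "prob_space S" unfolding S_def by (intro prob_space_PiM PZ)
  have K': "K \<in> S \<rightarrow>\<^sub>M prob_algebra W" using K by (simp add: S_def)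
  have s_i: "s i \<in> space PZ" if "s \<in> space S" "i < n" for s i
    using that by (auto simp: S_def space_PiM)
  have pop_meas[measurable]: "pop_risk loss PZ \<in> borel_measurable W"
    by (rule borel_measurable_pop_risk[OF PZ loss])
  have int_J: "integrable S (\<lambda>s. \<integral>w. loss w (s i) \<partial>K s)" if "i < n" for i
  proof (rule integrable_integral_kernel[OF S K', where C=C])
    have [measurable]: "i \<in> {..<n}" using that by simp
    show "(\<lambda>(w, s). loss w (s i)) \<in> borel_measurable (W \<Otimes>\<^sub>M S)" unfolding S_def by measurable
  qed (use loss_bnd s_i that in auto)
  have int_pop: "integrable S (\<lambda>s. \<integral>w. pop_risk loss PZ w \<partial>K s)"
    using abs_pop_risk_le[OF PZ loss loss_bnd]
    by (intro integrable_integral_kernel[OF S K', where C=C]) (auto simp: measurable_split_conv)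
  have "(\<integral>s. (\<integral>w. pop_risk loss PZ w \<partial>K s) \<partial>S) = (\<integral>w. pop_risk loss PZ w \<partial>(S \<bind> K))"
    using abs_pop_risk_le[OF PZ loss loss_bnd] kernel_space(1)[OF K']
    by (intro integral_bind[OF pop_meas _ measurable_prob_algebraD[OF K'] prob_space.finite_measure[OF S],
          where B=C and B'=1, symmetric]) (auto simp: prob_space.emeasure_space_1)
  moreover have "exp_gen loss PZ n K
      = (\<integral>s. (\<integral>w. pop_risk loss PZ w \<partial>K s) - (\<Sum>i<n. \<integral>w. loss w (s i) \<partial>K s) / n \<partial>S)"
    unfolding exp_gen_def S_def[symmetric] using kernel_space[OF K'] s_i
    by (intro Bochner_Integration.integral_cong integral_pop_risk_diff_emp_risk[OF PZ _ _ loss loss_bnd]) auto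
  moreover have "integrable S (\<lambda>s. (\<Sum>i<n. \<integral>w. loss w (s i) \<partial>K s) / n)"
    using int_J by (intro integrable_divide_zero integrable_sum) auto
  then have "(\<integral>s. (\<integral>w. pop_risk loss PZ w \<partial>K s) - (\<Sum>i<n. \<integral>w. loss w (s i) \<partial>K s) / n \<partial>S)
      = (\<integral>s. (\<integral>w. pop_risk loss PZ w \<partial>K s) \<partial>S) - (\<Sum>i<n. \<integral>s. (\<integral>w. loss w (s i) \<partial>K s) \<partial>S) / n"
    using int_pop int_J by (simp add: integral_sum)
  ultimately show ?thesis by simp
qed

lemma exp_gen_eq_sum_conditional:
  fixes PZ :: "'z measure" and K :: "(nat \<Rightarrow> 'z) \<Rightarrow> 'w measure" and loss :: "'w \<Rightarrow> 'z \<Rightarrow> real"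
    and \<kappa> :: "nat \<Rightarrow> 'z \<Rightarrow> 'w measure"
  assumes PZ: "prob_space PZ" and n: "0 < n" and K: "K \<in> PiM {..<n} (\<lambda>_. PZ) \<rightarrow>\<^sub>M prob_algebra W"
    and loss[measurable]: "(\<lambda>(w, z). loss w z) \<in> borel_measurable (W \<Otimes>\<^sub>M PZ)"
    and loss_bnd: "\<And>w z. z \<in> space PZ \<Longrightarrow> \<bar>loss w z\<bar> \<le> C"
    and \<kappa>: "\<And>i. i < n \<Longrightarrow> \<kappa> i \<in> PZ \<rightarrow>\<^sub>M prob_algebra W"
    and cond_law: "\<And>i A B. i < n \<Longrightarrow> A \<in> sets PZ \<Longrightarrow> B \<in> sets W \<Longrightarrow>
        (\<integral>s. indicator A (s i) * measure (K s) B \<partial>PiM {..<n} (\<lambda>_. PZ))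
          = (\<integral>z. indicator A z * measure (\<kappa> i z) B \<partial>PZ)"
  defines "Q \<equiv> PiM {..<n} (\<lambda>_. PZ) \<bind> K"
  shows "exp_gen loss PZ n K = (\<Sum>i<n. \<integral>z. (\<integral>w. loss w z \<partial>Q) - (\<integral>w. loss w z \<partial>\<kappa> i z) \<partial>PZ) / n"
    and "\<And>i. i < n \<Longrightarrow> (\<lambda>z. (\<integral>w. loss w z \<partial>Q) - (\<integral>w. loss w z \<partial>\<kappa> i z)) \<in> borel_measurable PZ"
proof -
  define S where "S = PiM {..<n} (\<lambda>_. PZ)"
  have S_in: "S \<in> space (prob_algebra S)" by (simp add: space_prob_algebra S_def prob_space_PiM PZ)
  have K': "K \<in> S \<rightarrow>\<^sub>M prob_algebra W" using K by (simp add: S_def)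
  have Q: "prob_space Q" "sets Q = sets W"
    unfolding Q_def S_def[symmetric] by (rule prob_space_bind'[OF S_in K'], rule sets_bind'[OF S_in K'])
  have "(\<lambda>_. Q) \<in> PZ \<rightarrow>\<^sub>M prob_algebra W" using Q by (intro measurable_const) (simp add: space_prob_algebra)
  then have int_A: "integrable PZ (\<lambda>z. \<integral>w. loss w z \<partial>Q)"
    using loss_bnd by (intro integrable_integral_kernel[OF PZ _ loss])
  have int_B: "integrable PZ (\<lambda>z. \<integral>w. loss w z \<partial>\<kappa> i z)" if "i < n" for i
    using loss_bnd by (intro integrable_integral_kernel[OF PZ \<kappa>[OF that]]) auto
  then show "(\<lambda>z. (\<integral>w. loss w z \<partial>Q) - (\<integral>w. loss w z \<partial>\<kappa> i z)) \<in> borel_measurable PZ" if "i < n" for i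
    using int_A that by (intro borel_measurable_integrable) auto
  have "(\<integral>w. pop_risk loss PZ w \<partial>Q) = (\<integral>z. (\<integral>w. loss w z \<partial>Q) \<partial>PZ)"
  proof -
    interpret QZ: pair_sigma_finite Q PZ using Q PZ by (intro pair_sigma_finite.intro) (auto intro: prob_space_imp_sigma_finite)
    have "integrable (Q \<Otimes>\<^sub>M PZ) (\<lambda>(w, z). loss w z)"
      using loss_bnd prob_space_pair[OF Q(1) PZ] Q(2)
      by (intro integrable_bounded[where B=C]) (auto simp: space_pair_measure prob_space_def cong: measurable_cong_sets)
    then show ?thesis unfolding pop_risk_def by (rule QZ.Fubini_integral[symmetric])
  qed
  moreover have "(\<integral>s. (\<integral>w. loss w (s i) \<partial>K s) \<partial>S) = (\<integral>z. (\<integral>w. loss w z \<partial>\<kappa> i z) \<partial>PZ)" if "i < n" for i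
    using that cond_law[OF that] loss_bnd unfolding S_def
    by (intro integral_kernel_eq_of_rectangles[OF prob_space_PiM[OF PZ] PZ K \<kappa>[OF that] _ _ loss]) auto
  ultimately have "exp_gen loss PZ n K
      = (\<Sum>i<n. (\<integral>z. (\<integral>w. loss w z \<partial>Q) \<partial>PZ) - (\<integral>z. (\<integral>w. loss w z \<partial>\<kappa> i z) \<partial>PZ)) / n"
    using exp_gen_eq_bind[OF PZ K loss loss_bnd] n by (simp add: Q_def S_def sum_subtractf diff_divide_distrib)
  also have "\<dots> = (\<Sum>i<n. \<integral>z. (\<integral>w. loss w z \<partial>Q) - (\<integral>w. loss w z \<partial>\<kappa> i z) \<partial>PZ) / n"
    using int_A int_B by (intro arg_cong[where f="\<lambda>x. x / n"] sum.cong) auto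
  finally show "exp_gen loss PZ n K = (\<Sum>i<n. \<integral>z. (\<integral>w. loss w z \<partial>Q) - (\<integral>w. loss w z \<partial>\<kappa> i z) \<partial>PZ) / n" .
qed

lemma integral_tv_dist_le_integral_Psi:
  fixes \<kappa> :: "'z \<Rightarrow> 'a::polish_space measure"
  assumes M: "finite_measure M" and \<kappa>: "\<kappa> \<in> M \<rightarrow>\<^sub>M prob_algebra borel"
    and Q: "prob_space Q" "sets Q = sets borel"
  shows "integrable M (\<lambda>z. tv_dist (\<kappa> z) Q)" "integrable M (\<lambda>z. Psi (rel_entropy (\<kappa> z) Q))"
    and "(\<integral>z. tv_dist (\<kappa> z) Q \<partial>M) \<le> (\<integral>z. Psi (rel_entropy (\<kappa> z) Q) \<partial>M)"
proof -
  have bounds: "0 \<le> tv_dist (\<kappa> z) Q" "tv_dist (\<kappa> z) Q \<le> Psi (rel_entropy (\<kappa> z) Q)"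
    "Psi (rel_entropy (\<kappa> z) Q) \<le> 1" if "z \<in> space M" for z
    using kernel_space[OF \<kappa> that] Q by (auto intro: tv_dist_nonneg tv_dist_le_Psi Psi_le_one)
  have abs_bounds: "\<bar>tv_dist (\<kappa> z) Q\<bar> \<le> 1" "\<bar>Psi (rel_entropy (\<kappa> z) Q)\<bar> \<le> 1" if "z \<in> space M" for z
    using bounds[OF that] unfolding abs_le_iff by linarith+
  show int_tv: "integrable M (\<lambda>z. tv_dist (\<kappa> z) Q)"
    using abs_bounds measurable_tv_dist_kernel[OF \<kappa> Q] by (intro integrable_bounded[OF M, where B=1])
  show int_Psi: "integrable M (\<lambda>z. Psi (rel_entropy (\<kappa> z) Q))"
    using abs_bounds measurable_compose[OF measurable_rel_entropy_kernel[OF \<kappa> Q] borel_measurable_Psi]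
    by (intro integrable_bounded[OF M, where B=1])
  show "(\<integral>z. tv_dist (\<kappa> z) Q \<partial>M) \<le> (\<integral>z. Psi (rel_entropy (\<kappa> z) Q) \<partial>M)"
    using int_tv int_Psi bounds by (intro integral_mono) auto
qed

lemma abs_integral_loss_diff_le_tv_dist:
  fixes \<kappa> :: "'z \<Rightarrow> 'w::polish_space measure" and loss :: "'w \<Rightarrow> 'z \<Rightarrow> real"
  assumes PZ: "prob_space PZ" and \<kappa>: "\<kappa> \<in> PZ \<rightarrow>\<^sub>M prob_algebra borel"
    and Q: "prob_space Q" "sets Q = sets borel"
    and loss: "(\<lambda>(w, z). loss w z) \<in> borel_measurable (borel \<Otimes>\<^sub>M PZ)"
    and bounded: "\<And>w z. z \<in> space PZ \<Longrightarrow> loss w z \<in> {a..b}"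
    and h_meas: "(\<lambda>z. (\<integral>w. loss w z \<partial>Q) - (\<integral>w. loss w z \<partial>\<kappa> z)) \<in> borel_measurable PZ"
  shows "\<bar>\<integral>z. (\<integral>w. loss w z \<partial>Q) - (\<integral>w. loss w z \<partial>\<kappa> z) \<partial>PZ\<bar> \<le> (b - a) * (\<integral>z. tv_dist (\<kappa> z) Q \<partial>PZ)"
proof -
  interpret PZ: prob_space PZ by fact
  define h where "h z = (\<integral>w. loss w z \<partial>Q) - (\<integral>w. loss w z \<partial>\<kappa> z)" for z
  have h_le: "\<bar>h z\<bar> \<le> (b - a) * tv_dist (\<kappa> z) Q" if z: "z \<in> space PZ" for z
  proof -
    have "(\<lambda>w. loss w z) \<in> borel_measurable (\<kappa> z)"
      using measurable_Pair2'[THEN measurable_compose, OF z loss] kernel_space(2)[OF \<kappa> z]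
      by (simp cong: measurable_cong_sets)
    then have "\<bar>(\<integral>w. loss w z \<partial>\<kappa> z) - (\<integral>w. loss w z \<partial>Q)\<bar> \<le> (b - a) * tv_dist (\<kappa> z) Q"
      using kernel_space[OF \<kappa> z] Q bounded[OF z] by (intro abs_integral_diff_le_tv_dist) auto
    then show ?thesis by (simp add: h_def abs_minus_commute)
  qed
  have int_tv: "integrable PZ (\<lambda>z. (b - a) * tv_dist (\<kappa> z) Q)"
    using integral_tv_dist_le_integral_Psi(1)[OF PZ.finite_measure_axioms \<kappa> Q] by simp
  have "integrable PZ h"
    using h_le h_meas unfolding h_def[symmetric]
    by (intro Bochner_Integration.integrable_bound[OF int_tv] AE_I2) (auto intro: order.trans[OF _ abs_ge_self])
  then have "(\<integral>z. \<bar>h z\<bar> \<partial>PZ) \<le> (\<integral>z. (b - a) * tv_dist (\<kappa> z) Q \<partial>PZ)"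
    using int_tv h_le by (intro integral_mono) auto
  moreover have "\<bar>\<integral>z. h z \<partial>PZ\<bar> \<le> (\<integral>z. \<bar>h z\<bar> \<partial>PZ)" by (rule integral_abs_bound)
  moreover have "(\<integral>z. (b - a) * tv_dist (\<kappa> z) Q \<partial>PZ) = (b - a) * (\<integral>z. tv_dist (\<kappa> z) Q \<partial>PZ)" by simp
  ultimately show ?thesis unfolding h_def by linarith
qed

theorem corollary1:
  fixes PZ :: "'z measure"
    and K :: "(nat \<Rightarrow> 'z) \<Rightarrow> 'w::polish_space measure"
    and loss :: "'w \<Rightarrow> 'z \<Rightarrow> real"
    and n :: nat and L a b :: real
    and \<kappa> :: "nat \<Rightarrow> 'z \<Rightarrow> 'w measure"
  assumes PZ: "prob_space PZ"
    and n_pos: "n > 0"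
    and K_kernel: "K \<in> measurable (PiM {..<n} (\<lambda>_. PZ)) (prob_algebra (borel :: 'w measure))"
    and loss_meas: "(\<lambda>(w, z). loss w z) \<in> borel_measurable ((borel :: 'w measure) \<Otimes>\<^sub>M PZ)"
    and lipschitz: "\<And>z. z \<in> space PZ \<Longrightarrow> L-lipschitz_on UNIV (\<lambda>w. loss w z)"
    and bounded: "\<And>w z. z \<in> space PZ \<Longrightarrow> loss w z \<in> {a..b}"
    and cond_kernel: "\<And>i. i < n \<Longrightarrow> \<kappa> i \<in> measurable PZ (prob_algebra (borel :: 'w measure))"
    and cond_law: "\<And>i A B. i < n \<Longrightarrow> A \<in> sets PZ \<Longrightarrow> B \<in> sets (borel :: 'w measure) \<Longrightarrow>
        (\<integral>s. indicator A (s i) * measure (K s) B \<partial>(PiM {..<n} (\<lambda>_. PZ)))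
          = (\<integral>z. indicator A z * measure (\<kappa> i z) B \<partial>PZ)"
  shows "\<bar>exp_gen loss PZ n K\<bar>
           \<le> (b - a) / real n * (\<Sum>i<n. \<integral>z. tv_dist (\<kappa> i z) (PiM {..<n} (\<lambda>_. PZ) \<bind> K) \<partial>PZ)
       \<and> (b - a) / real n * (\<Sum>i<n. \<integral>z. tv_dist (\<kappa> i z) (PiM {..<n} (\<lambda>_. PZ) \<bind> K) \<partial>PZ)
           \<le> (b - a) / real n * (\<Sum>i<n. \<integral>z. Psi (rel_entropy (\<kappa> i z) (PiM {..<n} (\<lambda>_. PZ) \<bind> K)) \<partial>PZ)"
proof -
  define Q where "Q = PiM {..<n} (\<lambda>_. PZ) \<bind> K"
  have S_in: "PiM {..<n} (\<lambda>_. PZ) \<in> space (prob_algebra (PiM {..<n} (\<lambda>_. PZ)))"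
    by (simp add: space_prob_algebra prob_space_PiM PZ)
  have Q: "prob_space Q" "sets Q = sets borel"
    unfolding Q_def by (rule prob_space_bind'[OF S_in K_kernel], rule sets_bind'[OF S_in K_kernel])
  have ab: "a \<le> b" using bounded prob_space.not_empty[OF PZ] by fastforce
  have loss_bnd: "\<bar>loss w z\<bar> \<le> \<bar>a\<bar> + \<bar>b\<bar>" if "z \<in> space PZ" for w z
    using bounded[OF that, of w] by auto
  have gen: "exp_gen loss PZ n K
      = (\<Sum>i<n. \<integral>z. (\<integral>w. loss w z \<partial>Q) - (\<integral>w. loss w z \<partial>\<kappa> i z) \<partial>PZ) / n"
    and h_meas: "\<And>i. i < n \<Longrightarrow> (\<lambda>z. (\<integral>w. loss w z \<partial>Q) - (\<integral>w. loss w z \<partial>\<kappa> i z)) \<in> borel_measurable PZ"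
    unfolding Q_def
    using exp_gen_eq_sum_conditional[where C="\<bar>a\<bar> + \<bar>b\<bar>" and W=borel and \<kappa>=\<kappa>, OF PZ n_pos K_kernel loss_meas]
      loss_bnd cond_kernel cond_law by blast+
  note tv_bound = abs_integral_loss_diff_le_tv_dist[OF PZ cond_kernel Q loss_meas bounded h_meas]
  note tv_le_Psi = integral_tv_dist_le_integral_Psi(3)[OF prob_space.finite_measure[OF PZ] cond_kernel Q]
  have "\<bar>exp_gen loss PZ n K\<bar> \<le> (\<Sum>i<n. (b - a) * (\<integral>z. tv_dist (\<kappa> i z) Q \<partial>PZ)) / n"
    unfolding gen by (auto intro!: divide_right_mono order.trans[OF sum_abs] sum_mono tv_bound)
  also have "\<dots> = (b - a) / n * (\<Sum>i<n. \<integral>z. tv_dist (\<kappa> i z) Q \<partial>PZ)"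
    by (simp add: sum_distrib_left sum_divide_distrib)
  finally have "\<bar>exp_gen loss PZ n K\<bar> \<le> (b - a) / n * (\<Sum>i<n. \<integral>z. tv_dist (\<kappa> i z) Q \<partial>PZ)" .
  moreover have "(b - a) / n * (\<Sum>i<n. \<integral>z. tv_dist (\<kappa> i z) Q \<partial>PZ)
      \<le> (b - a) / n * (\<Sum>i<n. \<integral>z. Psi (rel_entropy (\<kappa> i z) Q) \<partial>PZ)"
    using ab by (intro mult_left_mono sum_mono tv_le_Psi) auto
  ultimately show ?thesis unfolding Q_def by blast
qed

end
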